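(* Let $\mathfrak{n}\in A_+$. If $f\in\mathcal{H}(\mathfrak{n})$ satisfies $c_\mathfrak{m}(f)=0$ for all $\mathfrak{m}\in A_+$ with $\deg\mathfrak{m}<\deg\mathfrak{n}$, then $c_0(f)=0$.
   Context: $\mathbb{F}_q$ finite field with $q$ elements and characteristic $p$; $K=\mathbb{F}_q(\theta)$, $A=\mathbb{F}_q[\theta]$, $A_+$ the monic polynomials; $|x|_\infty=q^{\deg a-\deg b}$ for $x=a/b$; $\pi_\infty=\theta^{-1}$, $K_\infty=\mathbb{F}_q((\pi_\infty))$, $O_\infty=\mathbb{F}_q[[\pi_\infty]]$, $\mathcal{I}_\infty$ the matrices in $\mathrm{GL}_2(O_\infty)$ with lower-left entry in $\pi_\infty O_\infty$. Bruhat–Tits tree $\mathscr{T}$: vertices $\mathrm{GL}_2(K_\infty)/K_\infty^\times\mathrm{GL}_2(O_\infty)$, oriented edges $E(\mathscr{T})=\mathrm{GL}_2(K_\infty)/K_\infty^\times\mathcal{I}_\infty$; edge $e_g$ has origin $gK_\infty^\times\mathrm{GL}_2(O_\infty)$ and opposite $\bar e_g=e_{g\begin{pmatrix}0&1\\\pi_\infty&0\end{pmatrix}}$; left action of $\mathrm{GL}_2(K_\infty)$. $\Gamma_0(\mathfrak{n})=\{\begin{pmatrix}a&b\\c&d\end{pmatrix}\in\mathrm{GL}_2(A):\mathfrak{n}\mid c\}$. Harmonic cochain: $f:E(\mathscr{T})\to\mathbb{C}$ with $f(\bar e)=-f(e)$ and $\sum_{o(e)=v}f(e)=0$ for all vertices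 $v$. $\mathcal{H}(\mathfrak{n})$: $\Gamma_0(\mathfrak{n})$-invariant harmonic cochains. With $f(g)=f(e_g)$, $\psi(\sum a_n\pi_\infty^n)=\exp(2\pi\sqrt{-1}\,\mathrm{Tr}_{\mathbb{F}_q/\mathbb{F}_p}(a_1)/p)$, $f^*(r,m)=\int_{A\backslash K_\infty}f\begin{pmatrix}\pi_\infty^r&u\\0&1\end{pmatrix}\psi(-mu)\,du$ (Haar measure of total mass 1); $c_0(f)=f^*(2,0)$ and $c_\mathfrak{m}(f)=|\mathfrak{m}|_\infty f^*(\deg\mathfrak{m}+2,\mathfrak{m})$ for $\mathfrak{m}\in A_+$. *)

theory Defs
  imports "HOL-Analysis.Analysis" "HOL-Computational_Algebra.Polynomial"
          "HOL-Computational_Algebra.Formal_Laurent_Series"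
begin

text \<open>Setting: 'k is the finite field F_q. K_inf = F_q((pi)) is modelled by 'k fls,
  with pi_inf = fls_X and theta = fls_X_inv.  A = F_q[theta] is modelled by 'k poly.\<close>

datatype 'a mat2 = M2 'a 'a 'a 'a

fun mmul :: "'a::comm_ring_1 mat2 \<Rightarrow> 'a mat2 \<Rightarrow> 'a mat2" where
  "mmul (M2 a b c d) (M2 a' b' c' d') =
     M2 (a*a' + b*c') (a*b' + b*d') (c*a' + d*c') (c*b' + d*d')"

fun mdet :: "'a::comm_ring_1 mat2 \<Rightarrow> 'a" where
  "mdet (M2 a b c d) = a*d - b*c"

fun entries :: "'a mat2 \<Rightarrow> 'a set" where
  "entries (M2 a b c d) = {a,b,c,d}"

definition Oinf :: "'k::field fls set" where
  "Oinf = {x. 0 \<le> fls_subdegree x}"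
definition piOinf :: "'k::field fls set" where
  "piOinf = {x. x = 0 \<or> 1 \<le> fls_subdegree x}"
definition Ounits :: "'k::field fls set" where
  "Ounits = {x. x \<noteq> 0 \<and> fls_subdegree x = 0}"

definition GL2K :: "'k::field fls mat2 set" where
  "GL2K = {g. mdet g \<noteq> 0}"
definition GL2O :: "'k::field fls mat2 set" where
  "GL2O = {g. entries g \<subseteq> Oinf \<and> mdet g \<in> Ounits}"
definition Iwahori :: "'k::field fls mat2 set" where
  "Iwahori = {g. g \<in> GL2O \<and> (case g of M2 a b c d \<Rightarrow> c \<in> piOinf)}"
definition scalars :: "'k::field fls mat2 set" where
  "scalars = {M2 z 0 0 z | z. z \<noteq> 0}"

definition edgeOf :: "'k::field fls mat2 \<Rightarrow> 'k fls mat2 set" where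
  "edgeOf g = {x. \<exists>z k. z \<in> scalars \<and> k \<in> Iwahori \<and> x = mmul g (mmul z k)}"
definition vertexOf :: "'k::field fls mat2 \<Rightarrow> 'k fls mat2 set" where
  "vertexOf g = {x. \<exists>z k. z \<in> scalars \<and> k \<in> GL2O \<and> x = mmul g (mmul z k)}"
definition Edges :: "'k::field fls mat2 set set" where
  "Edges = edgeOf ` GL2K"
definition Vertices :: "'k::field fls mat2 set set" where
  "Vertices = vertexOf ` GL2K"
definition origin :: "'k::field fls mat2 set \<Rightarrow> 'k fls mat2 set" where
  "origin e = {y. \<exists>x k. x \<in> e \<and> k \<in> GL2O \<and> y = mmul x k}"
definition wmat :: "'k::field fls mat2" where
  "wmat = M2 0 1 fls_X 0"
definition opp :: "'k::field fls mat2 set \<Rightarrow> 'k fls mat2 set" where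
  "opp e = (\<lambda>x. mmul x wmat) ` e"
definition act :: "'k::field fls mat2 \<Rightarrow> 'k fls mat2 set \<Rightarrow> 'k fls mat2 set" where
  "act h e = (\<lambda>x. mmul h x) ` e"

definition emb :: "'k::field poly \<Rightarrow> 'k fls" where
  "emb a = (\<Sum>i\<le>degree a. fls_const (coeff a i) * fls_X_inv ^ i)"

fun memb :: "'k::field poly mat2 \<Rightarrow> 'k fls mat2" where
  "memb (M2 a b c d) = M2 (emb a) (emb b) (emb c) (emb d)"

definition Gamma0 :: "'k::field poly \<Rightarrow> 'k poly mat2 set" where
  "Gamma0 n = {M2 a b c d | a b c d. is_unit (a*d - b*c) \<and> n dvd c}"

text \<open>Harmonic cochains, Gamma_0(n)-invariant.  Values off Edges are irrelevant.\<close>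
definition harmonic :: "('k::{finite,field} fls mat2 set \<Rightarrow> complex) \<Rightarrow> bool" where
  "harmonic F \<longleftrightarrow>
     (\<forall>e\<in>Edges. F (opp e) = - F e) \<and>
     (\<forall>v\<in>Vertices. (\<Sum>e\<in>{e\<in>Edges. origin e = v}. F e) = 0)"

definition HH :: "'k::{finite,field} poly \<Rightarrow> ('k fls mat2 set \<Rightarrow> complex) set" where
  "HH n = {F. harmonic F \<and> (\<forall>\<gamma>\<in>Gamma0 n. \<forall>e\<in>Edges. F (act (memb \<gamma>) e) = F e)}"

definition ext_deg :: "'k::{finite,field} itself \<Rightarrow> nat" where
  "ext_deg _ = (THE r. CHAR('k) ^ r = CARD('k))"

definition tr :: "'k::{finite,field} \<Rightarrow> 'k" where
  "tr a = (\<Sum>i<ext_deg TYPE('k). a ^ (CHAR('k) ^ i))"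

definition tr_nat :: "'k::{finite,field} \<Rightarrow> nat" where
  "tr_nat a = (THE k. k < CHAR('k) \<and> of_nat k = tr a)"

definition psi :: "'k::{finite,field} fls \<Rightarrow> complex" where
  "psi x = cis (2 * pi * real (tr_nat (fls_nth x 1)) / real CHAR('k))"

text \<open>Haar integral (total mass 1) over A\K_inf of an A-periodic continuous function,
  as the limit of Riemann sums over the fundamental domain pi O_inf.\<close>
definition trunc_set :: "nat \<Rightarrow> 'k::{finite,field} fls set" where
  "trunc_set N = {u. \<forall>n. fls_nth u n \<noteq> 0 \<longrightarrow> 1 \<le> n \<and> n \<le> int N}"

definition haar :: "('k::{finite,field} fls \<Rightarrow> complex) \<Rightarrow> complex" where
  "haar h = lim (\<lambda>N. (\<Sum>u\<in>trunc_set N. h u) / of_nat (CARD('k) ^ N))"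

definition fval :: "('k::{finite,field} fls mat2 set \<Rightarrow> complex) \<Rightarrow> 'k fls mat2 \<Rightarrow> complex" where
  "fval F g = F (edgeOf g)"

definition fstar :: "('k::{finite,field} fls mat2 set \<Rightarrow> complex) \<Rightarrow> nat \<Rightarrow> 'k poly \<Rightarrow> complex" where
  "fstar F r m = haar (\<lambda>u. fval F (M2 (fls_X ^ r) u 0 1) * psi (- (emb m * u)))"

definition c0 :: "('k::{finite,field} fls mat2 set \<Rightarrow> complex) \<Rightarrow> complex" where
  "c0 F = fstar F 2 0"

definition cm :: "('k::{finite,field} fls mat2 set \<Rightarrow> complex) \<Rightarrow> 'k poly \<Rightarrow> complex" where
  "cm F m = of_nat (CARD('k) ^ degree m) * fstar F (degree m + 2) m"

end

theory Submission
  imports Defs "HOL-Number_Theory.Cong" "HOL-Library.Real_Mod"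
begin

text \<open>
  Let \<open>d = deg n\<close>. Unfolding the Haar integral, \<open>c\<^sub>0(f)\<close> and the \<open>c\<^sub>m(f)\<close> with
  \<open>deg m < d\<close> are, up to nonzero factors, the Fourier coefficients of the function
  \<open>u \<mapsto> f [[\<pi>\<^sup>d\<^sup>+\<^sup>1, u], [0, 1]]\<close> on the finite group \<open>\<pi>O\<^sub>\<infinity>/\<pi>\<^sup>d\<^sup>+\<^sup>1O\<^sub>\<infinity>\<close>;
  harmonicity makes the choice of the level \<open>d + 1\<close> irrelevant.  The diagonal matrices in
  \<open>\<Gamma>\<^sub>0(n)\<close> show that the coefficient of \<open>m\<close> does not change when \<open>m\<close> is scaled by a
  nonzero constant, so all nonconstant coefficients vanish and, by Fourier inversion, \<open>f\<close>
  takes one value \<open>G\<close> on all these edges, of which \<open>c\<^sub>0(f)\<close> is a multiple.  Harmonicity at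
  the origin of the edge of \<open>[[\<pi>\<^sup>d, 0], [0, 1]]\<close> shows that this edge carries the value
  \<open>q G\<close>, while \<open>[[1, 0], [n, 1]] \<in> \<Gamma>\<^sub>0(n)\<close> maps the edge of
  \<open>[[\<pi>\<^sup>d\<^sup>+\<^sup>1, -\<pi>\<^sup>d], [0, 1]]\<close> to the opposite of that edge.  Hence \<open>G = -q G\<close>,
  so \<open>G = 0\<close>.
\<close>

section \<open>Finite fields\<close>

lemma prime_CHAR: "prime CHAR('k::{finite,field})"
  using finite_imp_CHAR_pos[OF finite] prime_CHAR_semidom by blast

lemma CHAR_gt_1: "CHAR('k::{finite,field}) > 1"
  using prime_CHAR[where 'k='k] prime_gt_1_nat by blast

lemma CARD_ge_2: "CARD('k::{finite,field}) \<ge> 2"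
proof -
  have "card {0::'k, 1} \<le> CARD('k)" by (intro card_mono) auto
  thus ?thesis by simp
qed

lemma power_CARD_eq: "(x::'k::{finite,field}) ^ CARD('k) = x"
proof (cases "x = 0")
  case False
  define U where "U = UNIV - {0::'k}"
  have "bij_betw ((*) x) U U"
  proof (rule bij_betwI[where g = "\<lambda>y. y / x"])
  qed (use False in \<open>auto simp: U_def\<close>)
  hence "(\<Prod>y\<in>U. x * y) = \<Prod>U" by (rule prod.reindex_bij_betw)
  moreover have "(\<Prod>y\<in>U. x * y) = x ^ card U * \<Prod>U" by (simp add: prod.distrib)
  moreover have "\<Prod>U \<noteq> 0" by (simp add: U_def)
  moreover have "card U = CARD('k) - 1" by (simp add: U_def card_Diff_singleton)
  ultimately have "x ^ (CARD('k) - 1) = 1" by simp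
  hence "x * x ^ (CARD('k) - 1) = x" by simp
  thus ?thesis using CARD_ge_2[where 'k='k] by (simp flip: power_Suc)
qed (use CARD_ge_2[where 'k='k] in simp)

definition prime_field :: "'k::{finite,field} set" where
  "prime_field = range of_nat"

lemma of_nat_mod_CHAR: "(of_nat (n mod CHAR('k)) :: 'k::{finite,field}) = of_nat n"
  by (simp add: of_nat_eq_iff_cong_CHAR)

lemma of_nat_inj_below_CHAR:
  assumes "m < CHAR('k::{finite,field})" "n < CHAR('k)" "(of_nat m :: 'k) = of_nat n"
  shows "m = n"
  using assms by (simp add: of_nat_eq_iff_cong_CHAR cong_less_modulus_unique_nat)

lemma prime_field_eq: "(prime_field :: 'k::{finite,field} set) = of_nat ` {..<CHAR('k)}"
proof
  show "(prime_field :: 'k set) \<subseteq> of_nat ` {..<CHAR('k)}"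
  proof
    fix x :: 'k assume "x \<in> prime_field"
    then obtain n where "x = of_nat (n mod CHAR('k))"
      by (auto simp: prime_field_def of_nat_mod_CHAR)
    moreover have "n mod CHAR('k) < CHAR('k)" using CHAR_gt_1[where 'k='k] by simp
    ultimately show "x \<in> of_nat ` {..<CHAR('k)}" by blast
  qed
qed (auto simp: prime_field_def)

lemma card_prime_field: "card (prime_field :: 'k::{finite,field} set) = CHAR('k)"
proof -
  have "inj_on (of_nat :: nat \<Rightarrow> 'k) {..<CHAR('k)}"
    by (auto intro!: inj_onI of_nat_inj_below_CHAR)
  thus ?thesis by (simp add: prime_field_eq card_image)
qed

lemma prime_field_of_nat [simp]: "of_nat n \<in> prime_field"
  by (simp add: prime_field_def)

lemma prime_field_0 [simp]: "0 \<in> prime_field" and prime_field_1 [simp]: "1 \<in> prime_field"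
  using prime_field_of_nat[of 0] prime_field_of_nat[of 1] by simp_all

lemma prime_field_add: "a \<in> prime_field \<Longrightarrow> b \<in> prime_field \<Longrightarrow> a + b \<in> prime_field"
  by (auto simp: prime_field_def simp flip: of_nat_add)

lemma prime_field_mult: "a \<in> prime_field \<Longrightarrow> b \<in> prime_field \<Longrightarrow> a * b \<in> prime_field"
  by (auto simp: prime_field_def simp flip: of_nat_mult)

lemma prime_field_uminus:
  assumes "(a::'k::{finite,field}) \<in> prime_field"
  shows "- a \<in> prime_field"
proof -
  have "(-1::'k) = of_nat (CHAR('k) - 1)"
    using CHAR_gt_1[where 'k='k] by (simp add: of_nat_diff)
  hence "(-1::'k) \<in> prime_field" by simp
  from prime_field_mult[OF this assms] show ?thesis by simp
qed

lemma prime_field_diff: "a \<in> prime_field \<Longrightarrow> b \<in> prime_field \<Longrightarrow> a - b \<in> prime_field"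
  using prime_field_add[OF _ prime_field_uminus] by (metis diff_conv_add_uminus)

lemma prime_field_power: "a \<in> prime_field \<Longrightarrow> a ^ n \<in> prime_field"
  by (induction n) (auto intro: prime_field_mult)

lemma prime_field_inverse:
  assumes "(a::'k::{finite,field}) \<in> prime_field"
  shows "inverse a \<in> prime_field"
proof (cases "a = 0")
  case False
  obtain r where r: "CARD('k) = Suc (Suc r)"
    using CARD_ge_2[where 'k='k] by (metis add_2_eq_Suc le_Suc_ex)
  have "a * (a * a ^ r) = a" using power_CARD_eq[of a] unfolding r by simp
  hence "a * a ^ r = 1" using False by simp
  hence "inverse a = a ^ r" by (rule inverse_unique)
  thus ?thesis using prime_field_power[OF assms] by simp
qed simp

definition prime_field_subspace :: "'k::{finite,field} set \<Rightarrow> bool" where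
  "prime_field_subspace S \<longleftrightarrow> 0 \<in> S \<and> (\<forall>x\<in>S. \<forall>y\<in>S. x + y \<in> S) \<and>
     (\<forall>c\<in>prime_field. \<forall>x\<in>S. c * x \<in> S)"

lemma prime_field_subspace_extend:
  fixes S :: "'k::{finite,field} set"
  assumes S: "prime_field_subspace S" and x: "x \<notin> S"
  defines "S' \<equiv> (\<lambda>(s, c). s + c * x) ` (S \<times> prime_field)"
  shows "prime_field_subspace S'" "card S' = card S * CHAR('k)" "S \<subset> S'"
proof -
  have S0: "0 \<in> S" and S_add: "\<And>a b. a \<in> S \<Longrightarrow> b \<in> S \<Longrightarrow> a + b \<in> S"
    and S_scale: "\<And>c a. c \<in> prime_field \<Longrightarrow> a \<in> S \<Longrightarrow> c * a \<in> S"
    using S by (auto simp: prime_field_subspace_def)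
  show "prime_field_subspace S'"
    unfolding prime_field_subspace_def
  proof (intro conjI ballI)
    show "0 \<in> S'" unfolding S'_def using S0 by (intro image_eqI[of _ _ "(0, 0)"]) auto
  next
    fix a b assume "a \<in> S'" "b \<in> S'"
    then obtain s1 c1 s2 c2 where "s1 \<in> S" "c1 \<in> prime_field" "s2 \<in> S" "c2 \<in> prime_field"
      "a = s1 + c1 * x" "b = s2 + c2 * x"
      by (auto simp: S'_def)
    thus "a + b \<in> S'" unfolding S'_def
      by (intro image_eqI[of _ _ "(s1 + s2, c1 + c2)"]) (auto simp: algebra_simps S_add prime_field_add)
  next
    fix c :: 'k and a assume "c \<in> prime_field" "a \<in> S'"
    then obtain s1 c1 where "s1 \<in> S" "c1 \<in> prime_field" "a = s1 + c1 * x"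
      by (auto simp: S'_def)
    thus "c * a \<in> S'" using \<open>c \<in> prime_field\<close> unfolding S'_def
      by (intro image_eqI[of _ _ "(c * s1, c * c1)"]) (auto simp: algebra_simps S_scale prime_field_mult)
  qed
  have "inj_on (\<lambda>(s, c). s + c * x) (S \<times> prime_field)"
  proof (rule inj_onI, clarify)
    fix s1 c1 s2 c2
    assume h: "s1 \<in> S" "c1 \<in> prime_field" "s2 \<in> S" "c2 \<in> prime_field" "s1 + c1 * x = s2 + c2 * x"
    have "c1 = c2"
    proof (rule ccontr)
      assume "c1 \<noteq> c2"
      hence "x = inverse (c1 - c2) * (s2 - s1)" using h(5) by (simp add: field_simps)
      moreover have "s2 - s1 \<in> S"
        using S_add[OF h(3) S_scale[OF prime_field_uminus[OF prime_field_1] h(1)]] by simp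
      ultimately have "x \<in> S"
        using S_scale prime_field_inverse prime_field_diff h(2,4) by metis
      thus False using x by contradiction
    qed
    thus "s1 = s2 \<and> c1 = c2" using h(5) by simp
  qed
  thus "card S' = card S * CHAR('k)"
    unfolding S'_def by (simp add: card_image card_cartesian_product card_prime_field)
  have "x \<in> S'" unfolding S'_def using S0 by (intro image_eqI[of _ _ "(0, 1)"]) auto
  moreover have "S \<subseteq> S'" unfolding S'_def by (auto intro!: image_eqI[where x = "(s, 0)" for s])
  ultimately show "S \<subset> S'" using x by blast
qed

lemma prime_field_subspace_card_CHAR_power:
  assumes "prime_field_subspace (S::'k::{finite,field} set)" "card S = CHAR('k) ^ j"
  shows "\<exists>r. CARD('k) = CHAR('k) ^ r"
  using assms
proof (induction "card (UNIV - S)" arbitrary: S j rule: less_induct)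
  case less
  show ?case
  proof (cases "S = UNIV")
    case True
    thus ?thesis using less.prems(2) by auto
  next
    case False
    then obtain x where x: "x \<notin> S" by auto
    note S' = prime_field_subspace_extend[OF less.prems(1) x]
    let ?S' = "(\<lambda>(s, c). s + c * x) ` (S \<times> prime_field)"
    have "card (UNIV - ?S') < card (UNIV - S)"
      using S'(3) by (intro psubset_card_mono) auto
    moreover have "card ?S' = CHAR('k) ^ Suc j" using S'(2) less.prems(2) by simp
    ultimately show ?thesis using less.hyps S'(1) by blast
  qed
qed

lemma CARD_eq_CHAR_power: "\<exists>r. CARD('k::{finite,field}) = CHAR('k) ^ r"
  by (rule prime_field_subspace_card_CHAR_power[of "{0}" 0]) (auto simp: prime_field_subspace_def)

lemma CHAR_power_ext_deg: "CHAR('k::{finite,field}) ^ ext_deg TYPE('k) = CARD('k)"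
proof -
  obtain r where "CARD('k) = CHAR('k) ^ r" using CARD_eq_CHAR_power by blast
  hence "\<exists>!r. CHAR('k) ^ r = CARD('k)"
    using power_inject_exp[OF CHAR_gt_1[where 'k='k]] by auto
  thus ?thesis unfolding ext_deg_def by (rule theI')
qed

lemma ext_deg_pos: "ext_deg TYPE('k::{finite,field}) > 0"
  using CHAR_power_ext_deg[where 'k='k] CARD_ge_2[where 'k='k]
  by (cases "ext_deg TYPE('k)") auto

lemma tr_add: "tr (a + b) = tr a + tr (b::'k::{finite,field})"
  unfolding tr_def by (simp add: freshmans_dream'[OF prime_CHAR] sum.distrib)

lemma of_nat_power_CHAR: "(of_nat k :: 'k::{finite,field}) ^ CHAR('k) = of_nat k"
  by (induction k) (simp_all add: freshmans_dream[OF prime_CHAR] prime_gt_0_nat[OF prime_CHAR])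

text \<open>The prime field consists of the roots of \<open>X^p - X\<close>.\<close>

lemma power_CHAR_fixed_imp_prime_field:
  assumes "(t::'k::{finite,field}) ^ CHAR('k) = t"
  shows "t \<in> prime_field"
proof -
  define Q :: "'k poly" where "Q = monom 1 CHAR('k) - [:0, 1:]"
  have "coeff Q CHAR('k) = 1"
    using CHAR_gt_1[where 'k='k] by (simp add: Q_def coeff_pCons')
  hence Q0: "Q \<noteq> 0" by auto
  have "degree Q \<le> CHAR('k)" unfolding Q_def
    using CHAR_gt_1[where 'k='k] by (intro degree_diff_le) (auto simp: degree_monom_le)
  hence "card {x. poly Q x = 0} \<le> CHAR('k)"
    using card_poly_roots_bound[OF Q0] by linarith
  moreover have poly_Q: "poly Q x = x ^ CHAR('k) - x" for x
    by (simp add: Q_def poly_monom)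
  hence sub: "prime_field \<subseteq> {x. poly Q x = 0}"
    by (auto simp: prime_field_def of_nat_power_CHAR)
  ultimately have "card (prime_field :: 'k set) = card {x. poly Q x = 0}"
    using card_mono[OF finite sub] by (simp add: card_prime_field)
  hence "prime_field = {x. poly Q x = 0}" by (rule card_subset_eq[OF finite sub])
  thus ?thesis using assms poly_Q by auto
qed

lemma tr_in_prime_field: "tr (a::'k::{finite,field}) \<in> prime_field"
proof (rule power_CHAR_fixed_imp_prime_field)
  let ?p = "CHAR('k)" and ?r = "ext_deg TYPE('k)"
  have "tr a ^ ?p = (\<Sum>i<?r. a ^ (?p ^ Suc i))"
    unfolding tr_def freshmans_dream_sum[OF prime_CHAR refl]
    by (simp add: power_mult[symmetric] mult.commute)
  also have "\<dots> = (\<Sum>i<Suc ?r. a ^ (?p ^ i)) - a"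
    by (simp only: sum.lessThan_Suc_shift) simp
  also have "\<dots> = tr a"
    by (simp add: tr_def CHAR_power_ext_deg power_CARD_eq)
  finally show "tr a ^ ?p = tr a" .
qed

lemma tr_nat_spec: "tr_nat (a::'k::{finite,field}) < CHAR('k) \<and> of_nat (tr_nat a) = tr a"
proof -
  obtain k where "k < CHAR('k)" "of_nat k = tr a"
    using tr_in_prime_field[of a] by (auto simp: prime_field_eq)
  hence "\<exists>!k. k < CHAR('k) \<and> (of_nat k :: 'k) = tr a"
    using of_nat_inj_below_CHAR[where 'k='k] by metis
  thus ?thesis unfolding tr_nat_def by (rule theI')
qed

text \<open>\<open>tr\<close> is a polynomial function of degree \<open>p^(r-1) < q\<close>, so it has a non-root.\<close>

lemma ex_tr_nonzero: "\<exists>a::'k::{finite,field}. tr a \<noteq> 0"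
proof -
  let ?p = "CHAR('k)" and ?r = "ext_deg TYPE('k)"
  define T :: "'k poly" where "T = (\<Sum>i<?r. monom 1 (?p ^ i))"
  have "coeff T (?p ^ (?r - 1)) = (\<Sum>i<?r. if ?p ^ (?r - 1) = ?p ^ i then 1 else 0)"
    by (simp add: T_def coeff_sum coeff_monom eq_commute)
  also have "\<dots> = (\<Sum>i\<in>{?r - 1}. 1)"
    using ext_deg_pos[where 'k='k] power_inject_exp[OF CHAR_gt_1[where 'k='k]]
    by (intro sum.mono_neutral_cong_right) auto
  finally have T0: "T \<noteq> 0" by auto
  have "degree T \<le> ?p ^ (?r - 1)" unfolding T_def
    by (intro degree_sum_le)
       (auto intro!: order.trans[OF degree_monom_le] power_increasing CHAR_gt_1[THEN less_imp_le])
  moreover have "?p ^ (?r - 1) < ?p ^ ?r"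
    using ext_deg_pos[where 'k='k] CHAR_gt_1[where 'k='k] by (intro power_strict_increasing) auto
  ultimately have "card {x. poly T x = 0} < CARD('k)"
    using card_poly_roots_bound[OF T0] CHAR_power_ext_deg[where 'k='k] by linarith
  hence "{x. poly T x = 0} \<noteq> UNIV" by auto
  then obtain a where "poly T a \<noteq> 0" by auto
  moreover have "poly T a = tr a" by (simp add: T_def poly_sum poly_monom tr_def)
  ultimately show ?thesis by auto
qed

definition psi0 :: "'k::{finite,field} \<Rightarrow> complex" where
  "psi0 a = cis (2 * pi * real (tr_nat a) / real CHAR('k))"

lemma psi_eq_psi0: "psi x = psi0 (fls_nth x 1)"
  by (simp add: psi_def psi0_def)

lemma cis_2pi_mod: "cis (2 * pi * real (s mod p) / real p) = cis (2 * pi * real s / real p)"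
proof (cases "p = 0")
  case False
  have "real s = real (s mod p) + real p * real (s div p)"
    by (metis mod_mult_div_eq of_nat_add of_nat_mult)
  hence "2 * pi * real s / real p = 2 * pi * real (s mod p) / real p + 2 * pi * real (s div p)"
    using False by (simp add: field_simps)
  hence "cis (2 * pi * real s / real p) =
      cis (2 * pi * real (s mod p) / real p) * cis (2 * pi * real (s div p))"
    by (simp only: cis_mult)
  thus ?thesis by simp
qed simp

lemma psi0_add: "psi0 (a + b) = psi0 a * psi0 (b::'k::{finite,field})"
proof -
  let ?p = "CHAR('k)"
  have "(of_nat ((tr_nat a + tr_nat b) mod ?p) :: 'k) = tr (a + b)"
    using tr_nat_spec[of a] tr_nat_spec[of b] by (simp add: of_nat_mod_CHAR tr_add)
  hence "tr_nat (a + b) = (tr_nat a + tr_nat b) mod ?p"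
    using tr_nat_spec[of "a + b"] prime_gt_0_nat[OF prime_CHAR[where 'k='k]]
    by (intro of_nat_inj_below_CHAR[where 'k='k]) auto
  hence "psi0 (a + b) = cis (2 * pi * real (tr_nat a + tr_nat b) / real ?p)"
    by (simp only: psi0_def cis_2pi_mod)
  also have "\<dots> = psi0 a * psi0 b"
    by (simp add: psi0_def cis_mult add_divide_distrib distrib_left)
  finally show ?thesis .
qed

lemma psi0_0: "psi0 (0::'k::{finite,field}) = 1"
  using psi0_add[of "0::'k" 0] by (simp add: psi0_def)

lemma ex_psi0_ne_1: "\<exists>a::'k::{finite,field}. psi0 a \<noteq> 1"
proof -
  obtain a :: 'k where "tr a \<noteq> 0" using ex_tr_nonzero by blast
  hence k: "0 < tr_nat a" "tr_nat a < CHAR('k)"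
    using tr_nat_spec[of a] by (auto intro: Nat.gr0I)
  have "psi0 a \<noteq> 1"
  proof
    assume "psi0 a = 1"
    then obtain i :: int where "2 * pi * real (tr_nat a) / real CHAR('k) = of_int i * (2 * pi)"
      by (auto simp: psi0_def cis_eq_1_iff)
    hence "real_of_int (int (tr_nat a)) = real_of_int (i * int CHAR('k))"
      using k by (simp add: field_simps)
    hence "int (tr_nat a) = i * int CHAR('k)" by (simp only: of_int_eq_iff)
    hence "CHAR('k) dvd tr_nat a" by (metis dvd_triv_right int_dvd_int_iff)
    thus False using k nat_dvd_not_less by blast
  qed
  thus ?thesis by blast
qed

section \<open>The valuation ring, \<open>GL\<^sub>2(O\<^sub>\<infinity>)\<close> and the Iwahori group\<close>

lemma mem_Oinf_iff: "x \<in> Oinf \<longleftrightarrow> (\<forall>k<0. fls_nth x k = 0)"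
proof
  assume "x \<in> Oinf" thus "\<forall>k<0. fls_nth x k = 0" by (auto simp: Oinf_def)
next
  assume "\<forall>k<0. fls_nth x k = 0" thus "x \<in> Oinf"
    unfolding Oinf_def by (auto intro: fls_subdegree_ge0I)
qed

lemma mem_piOinf_iff: "x \<in> piOinf \<longleftrightarrow> (\<forall>k<1. fls_nth x k = 0)"
proof
  assume "x \<in> piOinf" thus "\<forall>k<1. fls_nth x k = 0" by (auto simp: piOinf_def)
next
  assume h: "\<forall>k<1. fls_nth x k = 0"
  show "x \<in> piOinf"
  proof (cases "x = 0")
    case False thus ?thesis using h unfolding piOinf_def by (auto intro: fls_subdegree_geI)
  qed (simp add: piOinf_def)
qed

lemma mem_Ounits_iff: "x \<in> Ounits \<longleftrightarrow> x \<in> Oinf \<and> fls_nth x 0 \<noteq> 0"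
proof
  assume "x \<in> Ounits"
  hence h: "x \<noteq> 0" "fls_subdegree x = 0" by (auto simp: Ounits_def)
  have "fls_nth x (fls_subdegree x) \<noteq> 0" using h(1) by (rule nth_fls_subdegree_nonzero)
  thus "x \<in> Oinf \<and> fls_nth x 0 \<noteq> 0" using h by (simp add: Oinf_def)
next
  assume h: "x \<in> Oinf \<and> fls_nth x 0 \<noteq> 0"
  hence "x \<noteq> 0" by auto
  moreover have "fls_subdegree x \<le> 0" using h by (intro fls_subdegree_leI) auto
  ultimately show "x \<in> Ounits" using h by (auto simp: Ounits_def Oinf_def)
qed

lemma Oinf_0 [simp]: "0 \<in> Oinf" by (simp add: Oinf_def)
lemma Oinf_1 [simp]: "1 \<in> Oinf" by (simp add: Oinf_def)
lemma Oinf_const [simp]: "fls_const c \<in> Oinf" by (simp add: Oinf_def)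
lemma Oinf_X_power [simp]: "(fls_X :: 'k::field fls) ^ n \<in> Oinf" by (simp add: Oinf_def)
lemma Oinf_add [simp]: "x \<in> Oinf \<Longrightarrow> y \<in> Oinf \<Longrightarrow> x + y \<in> Oinf"
  by (simp add: mem_Oinf_iff)
lemma Oinf_uminus [simp]: "x \<in> Oinf \<Longrightarrow> - x \<in> Oinf"
  by (simp add: mem_Oinf_iff)
lemma Oinf_diff [simp]: "x \<in> Oinf \<Longrightarrow> y \<in> Oinf \<Longrightarrow> x - y \<in> Oinf"
  by (simp add: mem_Oinf_iff)
lemma Oinf_mult [simp]: "(x::'k::field fls) \<in> Oinf \<Longrightarrow> y \<in> Oinf \<Longrightarrow> x * y \<in> Oinf"
  by (cases "x = 0"; cases "y = 0") (auto simp: Oinf_def)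

lemma piOinf_0 [simp]: "0 \<in> piOinf" by (simp add: piOinf_def)
lemma piOinf_imp_Oinf: "x \<in> piOinf \<Longrightarrow> x \<in> Oinf"
  by (simp add: mem_piOinf_iff mem_Oinf_iff)
lemma piOinf_add [simp]: "x \<in> piOinf \<Longrightarrow> y \<in> piOinf \<Longrightarrow> x + y \<in> piOinf"
  by (simp add: mem_piOinf_iff)
lemma piOinf_uminus [simp]: "x \<in> piOinf \<Longrightarrow> - x \<in> piOinf"
  by (simp add: mem_piOinf_iff)
lemma piOinf_mult: "(x::'k::field fls) \<in> piOinf \<Longrightarrow> y \<in> Oinf \<Longrightarrow> x * y \<in> piOinf"
  by (cases "x = 0"; cases "y = 0") (auto simp: Oinf_def piOinf_def)
lemma piOinf_mult_left: "(x::'k::field fls) \<in> Oinf \<Longrightarrow> y \<in> piOinf \<Longrightarrow> x * y \<in> piOinf"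
  using piOinf_mult[of y x] by (simp add: mult.commute)
lemma piOinf_X [simp]: "(fls_X :: 'k::field fls) \<in> piOinf" by (simp add: piOinf_def)

lemma fls_shift_1_piOinf: "x \<in> piOinf \<Longrightarrow> fls_shift 1 x \<in> Oinf"
  by (simp add: mem_piOinf_iff mem_Oinf_iff)
lemma fls_X_times_shift_1: "(fls_X :: 'k::field fls) * fls_shift 1 x = x"
  by (simp add: fls_X_times_conv_shift)

lemma Ounits_mult: "(x::'k::field fls) \<in> Ounits \<Longrightarrow> y \<in> Ounits \<Longrightarrow> x * y \<in> Ounits"
  by (simp add: Ounits_def)

lemma Ounits_mult_iff:
  assumes "(x::'k::field fls) \<in> Oinf" "y \<in> Oinf"
  shows "x * y \<in> Ounits \<longleftrightarrow> x \<in> Ounits \<and> y \<in> Ounits"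
  using assms by (cases "x = 0 \<or> y = 0") (auto simp: Ounits_def Oinf_def)

lemma Ounits_inverse: "(x::'k::field fls) \<in> Ounits \<Longrightarrow> inverse x \<in> Ounits"
  by (simp add: Ounits_def)

lemma Ounits_imp_Oinf: "x \<in> Ounits \<Longrightarrow> x \<in> Oinf" by (simp add: mem_Ounits_iff)

lemma Ounits_const: "c \<noteq> 0 \<Longrightarrow> fls_const c \<in> Ounits"
  by (simp add: mem_Ounits_iff)
lemma Ounits_uminus: "x \<in> Ounits \<Longrightarrow> - x \<in> Ounits"
  by (simp add: mem_Ounits_iff)

lemma Ounits_nonzero: "x \<in> Ounits \<Longrightarrow> x \<noteq> 0" by (simp add: Ounits_def)

lemma piOinf_not_Ounits: "x \<in> piOinf \<Longrightarrow> x \<notin> Ounits"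
  by (simp add: mem_Ounits_iff mem_piOinf_iff)

lemma Oinf_not_piOinf_imp_Ounits: "x \<in> Oinf \<Longrightarrow> x \<notin> piOinf \<Longrightarrow> x \<in> Ounits"
proof -
  assume a: "x \<in> Oinf" "x \<notin> piOinf"
  then obtain k where k: "k < 1" "fls_nth x k \<noteq> 0" by (auto simp: mem_piOinf_iff)
  have "\<not> k < 0" using a(1) k(2) by (auto simp: mem_Oinf_iff)
  hence "k = 0" using k(1) by linarith
  thus "x \<in> Ounits" using a(1) k(2) by (simp add: mem_Ounits_iff)
qed

lemma inverse_Ounits_Oinf: "(x::'k::field fls) \<in> Ounits \<Longrightarrow> inverse x \<in> Oinf"
  using Ounits_inverse Ounits_imp_Oinf by blast

definition mat_one :: "'a::comm_ring_1 mat2" where "mat_one = M2 1 0 0 1"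
definition mat_scalar :: "'a::comm_ring_1 \<Rightarrow> 'a mat2" where "mat_scalar z = M2 z 0 0 z"
fun mat_inv :: "'a::field mat2 \<Rightarrow> 'a mat2" where
  "mat_inv (M2 a b c d) = M2 (d / (a*d - b*c)) (- b / (a*d - b*c)) (- c / (a*d - b*c)) (a / (a*d - b*c))"

lemma mmul_assoc: "mmul (mmul x y) z = mmul x (mmul y (z::'a::comm_ring_1 mat2))"
  by (cases x; cases y; cases z) (simp add: algebra_simps)

lemma mmul_mat_one [simp]: "mmul mat_one x = x" "mmul x mat_one = (x::'a::comm_ring_1 mat2)"
  by (cases x; simp add: mat_one_def)+

lemma mat_scalar_commute: "mmul (mat_scalar a) x = mmul x (mat_scalar (a::'a::comm_ring_1))"
  by (cases x) (simp add: mat_scalar_def algebra_simps)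

lemma mat_scalar_1: "mat_scalar 1 = mat_one" by (simp add: mat_scalar_def mat_one_def)

lemma mdet_mmul: "mdet (mmul x y) = mdet x * mdet (y::'a::comm_ring_1 mat2)"
  by (cases x; cases y) (simp add: algebra_simps)

lemma mmul_mat_inv:
  assumes "mdet x \<noteq> 0" shows "mmul x (mat_inv x) = (mat_one::'a::field mat2)"
proof (cases x)
  case (M2 a b c d)
  hence "(a*d - b*c) * inverse (a*d - b*c) = 1" using assms by simp
  thus ?thesis using M2 by (simp add: mat_one_def divide_inverse algebra_simps)
qed

lemma mat_inv_mmul:
  assumes "mdet x \<noteq> 0" shows "mmul (mat_inv x) x = (mat_one::'a::field mat2)"
proof (cases x)
  case (M2 a b c d)
  hence "(a*d - b*c) * inverse (a*d - b*c) = 1" using assms by simp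
  thus ?thesis using M2 by (simp add: mat_one_def divide_inverse algebra_simps)
qed

lemma mdet_mat_inv: "mdet x \<noteq> 0 \<Longrightarrow> mdet (mat_inv x) = inverse (mdet (x::'a::field mat2))"
  using mdet_mmul[of x "mat_inv x"] by (simp add: mmul_mat_inv mat_one_def field_simps)

lemma mmul_cancel_left:
  assumes "mdet h \<noteq> 0" "mmul h x = mmul h (y::'a::field mat2)"
  shows "x = y"
proof -
  have "mmul (mat_inv h) (mmul h x) = mmul (mat_inv h) (mmul h y)" using assms(2) by simp
  thus ?thesis by (simp add: mmul_assoc[symmetric] mat_inv_mmul[OF assms(1)])
qed

lemma mem_scalars_iff: "z \<in> scalars \<longleftrightarrow> (\<exists>a. a \<noteq> 0 \<and> z = mat_scalar a)"
  by (auto simp: scalars_def mat_scalar_def)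

lemma mem_Iwahori_iff: "M2 a b c d \<in> Iwahori \<longleftrightarrow>
   a \<in> Oinf \<and> b \<in> Oinf \<and> c \<in> piOinf \<and> d \<in> Oinf \<and> a*d - b*c \<in> Ounits"
  by (auto simp: Iwahori_def GL2O_def piOinf_imp_Oinf)

lemma mem_GL2O_iff: "M2 a b c d \<in> GL2O \<longleftrightarrow>
   a \<in> Oinf \<and> b \<in> Oinf \<and> c \<in> Oinf \<and> d \<in> Oinf \<and> a*d - b*c \<in> Ounits"
  by (auto simp: GL2O_def)

lemma Iwahori_imp_GL2O: "k \<in> Iwahori \<Longrightarrow> k \<in> GL2O" by (simp add: Iwahori_def)

lemma Iwahori_mat_one: "(mat_one :: 'k::field fls mat2) \<in> Iwahori"
  by (simp add: mat_one_def mem_Iwahori_iff mem_Ounits_iff)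

lemma GL2O_mat_one: "(mat_one :: 'k::field fls mat2) \<in> GL2O"
  by (simp add: mat_one_def mem_GL2O_iff mem_Ounits_iff)

lemma mdet_Ounits_nonzero: "mdet k \<in> Ounits \<Longrightarrow> mdet k \<noteq> 0"
  by (simp add: Ounits_def)

lemma mdet_GL2O: "(k :: 'k::field fls mat2) \<in> GL2O \<Longrightarrow> mdet k \<in> Ounits"
  by (cases k) (simp add: mem_GL2O_iff)

lemma mdet_Iwahori: "(k :: 'k::field fls mat2) \<in> Iwahori \<Longrightarrow> mdet k \<in> Ounits"
  using mdet_GL2O Iwahori_imp_GL2O by blast

lemma GL2O_mmul:
  assumes "x \<in> GL2O" "y \<in> GL2O"
  shows "mmul x y \<in> (GL2O :: 'k::field fls mat2 set)"
proof -
  have "mdet (mmul x y) \<in> Ounits" using assms by (simp add: mdet_mmul mdet_GL2O Ounits_mult)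
  thus ?thesis using assms by (cases x; cases y) (simp add: mem_GL2O_iff)
qed

lemma Iwahori_mmul:
  assumes "x \<in> Iwahori" "y \<in> Iwahori"
  shows "mmul x y \<in> (Iwahori :: 'k::field fls mat2 set)"
proof -
  obtain a b c d a' b' c' d' where xy: "x = M2 a b c d" "y = M2 a' b' c' d'"
    by (cases x, cases y)
  have "mmul x y \<in> GL2O" using assms Iwahori_imp_GL2O GL2O_mmul by blast
  moreover have "c * a' + d * c' \<in> piOinf"
    using assms by (simp add: xy mem_Iwahori_iff piOinf_mult piOinf_mult_left)
  ultimately show ?thesis by (simp add: Iwahori_def xy)
qed

lemma divide_Ounits_Oinf:
  "x \<in> Oinf \<Longrightarrow> u \<in> Ounits \<Longrightarrow> x / u \<in> (Oinf :: 'k::field fls set)"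
  by (simp add: divide_inverse inverse_Ounits_Oinf)

lemma GL2O_mat_inv:
  assumes "x \<in> GL2O"
  shows "mat_inv x \<in> (GL2O :: 'k::field fls mat2 set)"
proof (cases x)
  case (M2 a b c d)
  have "mdet x \<in> Ounits" using assms by (rule mdet_GL2O)
  hence "mdet (mat_inv x) \<in> Ounits"
    by (simp add: mdet_mat_inv Ounits_inverse mdet_Ounits_nonzero)
  thus ?thesis using assms by (simp add: M2 mem_GL2O_iff divide_Ounits_Oinf)
qed

lemma Iwahori_mat_inv: "x \<in> Iwahori \<Longrightarrow> mat_inv x \<in> (Iwahori :: 'k::field fls mat2 set)"
proof -
  assume h: "x \<in> Iwahori"
  have "mat_inv x \<in> GL2O" using h Iwahori_imp_GL2O GL2O_mat_inv by blast
  moreover obtain a b c d where x: "x = M2 a b c d" by (cases x)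
  moreover have "c \<in> piOinf" "a*d - b*c \<in> Ounits" using h by (simp_all add: x mem_Iwahori_iff)
  moreover have "(- c) / (a*d - b*c) \<in> piOinf"
    using calculation by (simp add: divide_inverse piOinf_mult inverse_Ounits_Oinf)
  ultimately show ?thesis unfolding Iwahori_def by simp
qed

section \<open>The Bruhat-Tits tree\<close>

definition coset :: "'k::field fls mat2 set \<Rightarrow> 'k fls mat2 \<Rightarrow> 'k fls mat2 set" where
  "coset K g = {x. \<exists>z k. z \<in> scalars \<and> k \<in> K \<and> x = mmul g (mmul z k)}"

lemma edgeOf_coset: "edgeOf g = coset Iwahori g"
  by (simp add: edgeOf_def coset_def)
lemma vertexOf_coset: "vertexOf g = coset GL2O g"
  by (simp add: vertexOf_def coset_def)

definition mat_group :: "'k::field fls mat2 set \<Rightarrow> bool" where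
  "mat_group K \<longleftrightarrow> mat_one \<in> K \<and> (\<forall>a\<in>K. \<forall>b\<in>K. mmul a b \<in> K) \<and>
     (\<forall>a\<in>K. mat_inv a \<in> K \<and> mdet a \<noteq> 0)"

lemma mat_group_Iwahori: "mat_group Iwahori"
  unfolding mat_group_def
  using Iwahori_mat_one Iwahori_mmul Iwahori_mat_inv mdet_Iwahori mdet_Ounits_nonzero by blast
lemma mat_group_GL2O: "mat_group GL2O"
  unfolding mat_group_def
  using GL2O_mat_one GL2O_mmul GL2O_mat_inv mdet_GL2O mdet_Ounits_nonzero by blast

lemma mat_scalar_in_scalars: "a \<noteq> 0 \<Longrightarrow> mat_scalar a \<in> scalars"
  by (auto simp: mem_scalars_iff)

lemma coset_self: "mat_group K \<Longrightarrow> g \<in> coset K g"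
proof -
  assume "mat_group K"
  hence "mat_one \<in> K" by (simp add: mat_group_def)
  moreover have "mat_scalar 1 \<in> scalars" by (rule mat_scalar_in_scalars) simp
  moreover have "g = mmul g (mmul (mat_scalar 1) mat_one)" by (simp add: mat_scalar_1)
  ultimately show ?thesis unfolding coset_def by blast
qed

lemma mat_scalar_mmul_commute:
  "mmul (mat_scalar a) (mmul k (mmul (mat_scalar b) k')) = mmul (mat_scalar (a * b)) (mmul k k')"
  by (cases k; cases k') (simp add: mat_scalar_def algebra_simps)

lemma coset_subset:
  assumes K: "mat_group K" and z: "z \<in> scalars" and k: "k \<in> K"
  shows "coset K (mmul g (mmul z k)) \<subseteq> coset K g"
proof
  fix x assume "x \<in> coset K (mmul g (mmul z k))"
  then obtain z' k' where h: "z' \<in> scalars" "k' \<in> K" "x = mmul (mmul g (mmul z k)) (mmul z' k')"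
    by (auto simp: coset_def)
  obtain a where a: "a \<noteq> 0" "z = mat_scalar a" using z by (auto simp: mem_scalars_iff)
  obtain b where b: "b \<noteq> 0" "z' = mat_scalar b" using h(1) by (auto simp: mem_scalars_iff)
  have "x = mmul g (mmul (mat_scalar (a*b)) (mmul k k'))"
    using h(3) by (simp add: mmul_assoc mat_scalar_mmul_commute a b)
  moreover have "mat_scalar (a*b) \<in> scalars" using a b by (simp add: mat_scalar_in_scalars)
  moreover have "mmul k k' \<in> K" using K k h(2) by (simp add: mat_group_def)
  ultimately show "x \<in> coset K g" unfolding coset_def by blast
qed

lemma coset_mmul_right:
  assumes K: "mat_group K" and z: "z \<in> scalars" and k: "k \<in> K"
  shows "coset K (mmul g (mmul z k)) = coset K g"
proof
  show "coset K (mmul g (mmul z k)) \<subseteq> coset K g" by (rule coset_subset[OF assms])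
next
  obtain a where a: "a \<noteq> 0" "z = mat_scalar a" using z by (auto simp: mem_scalars_iff)
  have kd: "mdet k \<noteq> 0" "mat_inv k \<in> K" using K k by (auto simp: mat_group_def)
  let ?g' = "mmul g (mmul z k)"
  have "mmul ?g' (mmul (mat_scalar (inverse a)) (mat_inv k)) =
      mmul g (mmul (mat_scalar (a * inverse a)) (mmul k (mat_inv k)))"
    by (simp add: mmul_assoc mat_scalar_mmul_commute a)
  also have "\<dots> = g" using a kd by (simp add: mmul_mat_inv mat_scalar_1)
  finally have "coset K g = coset K (mmul ?g' (mmul (mat_scalar (inverse a)) (mat_inv k)))"
    by simp
  also have "\<dots> \<subseteq> coset K ?g'"
    using a kd by (intro coset_subset[OF K]) (simp_all add: mat_scalar_in_scalars)
  finally show "coset K g \<subseteq> coset K ?g'" .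
qed

lemma coset_mmul_K: "mat_group K \<Longrightarrow> k \<in> K \<Longrightarrow> coset K (mmul g k) = coset K g"
proof -
  assume h: "mat_group K" "k \<in> K"
  have "mat_scalar 1 \<in> scalars" by (rule mat_scalar_in_scalars) simp
  from coset_mmul_right[OF h(1) this h(2), of g] show ?thesis by (simp only: mat_scalar_1 mmul_mat_one)
qed

lemma coset_mmul_scalar:
  "mat_group K \<Longrightarrow> a \<noteq> 0 \<Longrightarrow> coset K (mmul g (mat_scalar a)) = coset K g"
  using coset_mmul_right[of K "mat_scalar a" mat_one g]
  by (simp add: mat_scalar_in_scalars mat_group_def)

lemma coset_eqD:
  assumes "mat_group K" "coset K g1 = coset K g2"
  shows "\<exists>z k. z \<in> scalars \<and> k \<in> K \<and> g2 = mmul g1 (mmul z k)"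
proof -
  have "g2 \<in> coset K g1" using coset_self[OF assms(1), of g2] assms(2) by simp
  thus ?thesis by (auto simp: coset_def)
qed

lemma edgeOf_mmul_Iwahori: "k \<in> Iwahori \<Longrightarrow> edgeOf (mmul g k) = edgeOf g"
  by (simp add: edgeOf_coset coset_mmul_K mat_group_Iwahori)
lemma edgeOf_mmul_scalar: "a \<noteq> 0 \<Longrightarrow> edgeOf (mmul g (mat_scalar a)) = edgeOf g"
  by (simp add: edgeOf_coset coset_mmul_scalar mat_group_Iwahori)
lemma vertexOf_mmul_GL2O: "k \<in> GL2O \<Longrightarrow> vertexOf (mmul g k) = vertexOf g"
  by (simp add: vertexOf_coset coset_mmul_K mat_group_GL2O)

lemma edgeOf_eqD:
  "edgeOf g1 = edgeOf g2 \<Longrightarrow> \<exists>a k. a \<noteq> 0 \<and> k \<in> Iwahori \<and> g2 = mmul g1 (mmul (mat_scalar a) k)"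
  using coset_eqD[OF mat_group_Iwahori, of g1 g2] by (auto simp: edgeOf_coset mem_scalars_iff)
lemma vertexOf_eqD:
  "vertexOf g1 = vertexOf g2 \<Longrightarrow> \<exists>a k. a \<noteq> 0 \<and> k \<in> GL2O \<and> g2 = mmul g1 (mmul (mat_scalar a) k)"
  using coset_eqD[OF mat_group_GL2O, of g1 g2] by (auto simp: vertexOf_coset mem_scalars_iff)

lemma edgeOf_Edges: "mdet g \<noteq> 0 \<Longrightarrow> edgeOf g \<in> Edges"
  by (simp add: Edges_def GL2K_def)
lemma vertexOf_Vertices: "mdet g \<noteq> 0 \<Longrightarrow> vertexOf g \<in> Vertices"
  by (simp add: Vertices_def GL2K_def)

lemma act_edgeOf: "act h (edgeOf g) = edgeOf (mmul h g)"
  unfolding act_def edgeOf_def by (auto simp: mmul_assoc)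

lemma origin_edgeOf: "origin (edgeOf g) = vertexOf (g :: 'k::field fls mat2)"
proof
  show "origin (edgeOf g) \<subseteq> vertexOf g"
  proof
    fix y assume "y \<in> origin (edgeOf g)"
    then obtain z k k' where h: "z \<in> scalars" "k \<in> Iwahori" "k' \<in> GL2O" "y = mmul (mmul g (mmul z k)) k'"
      by (auto simp: origin_def edgeOf_def)
    have "y = mmul g (mmul z (mmul k k'))" using h(4) by (simp add: mmul_assoc)
    moreover have "mmul k k' \<in> GL2O" using h Iwahori_imp_GL2O GL2O_mmul by blast
    ultimately show "y \<in> vertexOf g" using h(1) by (auto simp: vertexOf_def)
  qed
next
  show "vertexOf g \<subseteq> origin (edgeOf g)"
  proof
    fix y assume "y \<in> vertexOf g"
    then obtain z k where h: "z \<in> scalars" "k \<in> GL2O" "y = mmul g (mmul z k)" by (auto simp: vertexOf_def)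
    have "mmul g (mmul z mat_one) \<in> edgeOf g" using h(1) Iwahori_mat_one unfolding edgeOf_def by blast
    moreover have "y = mmul (mmul g (mmul z mat_one)) k" using h(3) by (simp add: mmul_assoc)
    ultimately show "y \<in> origin (edgeOf g)" using h(2) unfolding origin_def by blast
  qed
qed

fun wconj :: "'k::field fls mat2 \<Rightarrow> 'k fls mat2" where
  "wconj (M2 a b c d) = M2 d (fls_shift 1 c) (fls_X * b) a"

lemma mmul_wmat_wconj: "k \<in> Iwahori \<Longrightarrow> mmul k wmat = mmul wmat (wconj k)"
proof (cases k)
  case (M2 a b c d)
  assume "k \<in> Iwahori"
  hence "c \<in> piOinf" by (simp add: M2 mem_Iwahori_iff)
  hence "fls_X * fls_shift 1 c = c" by (simp add: fls_X_times_shift_1)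
  thus ?thesis by (simp add: M2 wmat_def algebra_simps)
qed

lemma wmat_mmul_wconj: "k \<in> Iwahori \<Longrightarrow> mmul wmat k = mmul (wconj k) wmat"
proof (cases k)
  case (M2 a b c d)
  assume "k \<in> Iwahori"
  hence "c \<in> piOinf" by (simp add: M2 mem_Iwahori_iff)
  hence "fls_X * fls_shift 1 c = c" by (simp add: fls_X_times_shift_1)
  hence "fls_shift 1 c * fls_X = c" by (simp add: mult.commute)
  thus ?thesis by (simp add: M2 wmat_def algebra_simps)
qed

lemma Iwahori_wconj: "k \<in> Iwahori \<Longrightarrow> wconj k \<in> Iwahori"
proof (cases k)
  case (M2 a b c d)
  assume "k \<in> Iwahori"
  hence h: "a \<in> Oinf" "b \<in> Oinf" "c \<in> piOinf" "d \<in> Oinf" "a*d - b*c \<in> Ounits"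
    by (simp_all add: M2 mem_Iwahori_iff)
  have "fls_X * fls_shift 1 c = c" by (rule fls_X_times_shift_1)
  hence eq: "d * a - fls_shift 1 c * (fls_X * b) = a*d - b*c" by (simp add: algebra_simps)
  show ?thesis
    unfolding M2 wconj.simps mem_Iwahori_iff eq
    using h fls_shift_1_piOinf[OF h(3)] piOinf_mult[OF piOinf_X h(2)] by blast
qed

lemma opp_edgeOf: "opp (edgeOf g) = edgeOf (mmul g wmat)"
proof
  show "opp (edgeOf g) \<subseteq> edgeOf (mmul g wmat)"
  proof
    fix y assume "y \<in> opp (edgeOf g)"
    then obtain z k where h: "z \<in> scalars" "k \<in> Iwahori" "y = mmul (mmul g (mmul z k)) wmat"
      by (auto simp: opp_def edgeOf_def)
    have "y = mmul g (mmul z (mmul k wmat))" using h(3) by (simp add: mmul_assoc)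
    also have "\<dots> = mmul g (mmul z (mmul wmat (wconj k)))" using mmul_wmat_wconj[OF h(2)] by simp
    also have "\<dots> = mmul g (mmul (mmul z wmat) (wconj k))" by (simp add: mmul_assoc)
    also have "\<dots> = mmul g (mmul (mmul wmat z) (wconj k))"
      using h(1) by (auto simp: mem_scalars_iff mat_scalar_commute)
    also have "\<dots> = mmul (mmul g wmat) (mmul z (wconj k))" by (simp add: mmul_assoc)
    finally show "y \<in> edgeOf (mmul g wmat)" using h(1) Iwahori_wconj[OF h(2)] by (auto simp: edgeOf_def)
  qed
next
  show "edgeOf (mmul g wmat) \<subseteq> opp (edgeOf g)"
  proof
    fix y assume "y \<in> edgeOf (mmul g wmat)"
    then obtain z k where h: "z \<in> scalars" "k \<in> Iwahori" "y = mmul (mmul g wmat) (mmul z k)"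
      by (auto simp: edgeOf_def)
    have "y = mmul g (mmul (mmul wmat z) k)" using h(3) by (simp add: mmul_assoc)
    also have "\<dots> = mmul g (mmul (mmul z wmat) k)"
      using h(1) by (auto simp: mem_scalars_iff mat_scalar_commute)
    also have "\<dots> = mmul g (mmul z (mmul wmat k))" by (simp add: mmul_assoc)
    also have "\<dots> = mmul g (mmul z (mmul (wconj k) wmat))" using wmat_mmul_wconj[OF h(2)] by simp
    also have "\<dots> = mmul (mmul g (mmul z (wconj k))) wmat" by (simp add: mmul_assoc)
    finally have "y = mmul (mmul g (mmul z (wconj k))) wmat" .
    moreover have "mmul g (mmul z (wconj k)) \<in> edgeOf g" using h(1) Iwahori_wconj[OF h(2)] by (auto simp: edgeOf_def)
    ultimately show "y \<in> opp (edgeOf g)" by (auto simp: opp_def)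
  qed
qed

definition branch :: "'k::field \<Rightarrow> 'k fls mat2" where "branch b = M2 (fls_const b) 1 1 0"

lemma branch_GL2O: "branch b \<in> GL2O"
  by (simp add: branch_def mem_GL2O_iff mem_Ounits_iff)

lemma mdet_branch: "mdet (branch b) = -1" by (simp add: branch_def)

lemma EdgesE: "e \<in> Edges \<Longrightarrow> \<exists>g. mdet g \<noteq> 0 \<and> e = edgeOf g"
  by (auto simp: Edges_def GL2K_def)

lemma Oinf_nth_0_imp_piOinf: "x \<in> Oinf \<Longrightarrow> fls_nth x 0 = 0 \<Longrightarrow> x \<in> piOinf"
proof -
  assume h: "x \<in> Oinf" "fls_nth x 0 = 0"
  have "fls_nth x k = 0" if "k < 1" for k
  proof (cases "k < 0")
    case True thus ?thesis using h(1) by (simp add: mem_Oinf_iff)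
  next
    case False hence "k = 0" using that by simp
    thus ?thesis using h(2) by simp
  qed
  thus ?thesis by (simp add: mem_piOinf_iff)
qed

lemma GL2O_cases:
  assumes k: "k \<in> GL2O"
  shows "k \<in> Iwahori \<or> (\<exists>b k'. k' \<in> Iwahori \<and> k = mmul (branch b) k')"
proof (cases k)
  case (M2 \<alpha> \<beta> \<gamma> \<delta>)
  have h: "\<alpha> \<in> Oinf" "\<beta> \<in> Oinf" "\<gamma> \<in> Oinf" "\<delta> \<in> Oinf"
    "\<alpha>*\<delta> - \<beta>*\<gamma> \<in> Ounits"
    using k by (simp_all add: M2 mem_GL2O_iff)
  show ?thesis
  proof (cases "\<gamma> \<in> piOinf")
    case True
    hence "k \<in> Iwahori" using h by (simp add: M2 mem_Iwahori_iff)
    thus ?thesis by simp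
  next
    case False
    hence gu: "\<gamma> \<in> Ounits" using h(3) by (rule Oinf_not_piOinf_imp_Ounits[rotated])
    hence gnz: "\<gamma> \<noteq> 0" by (rule Ounits_nonzero)
    define b0 where "b0 = fls_nth (\<alpha> * inverse \<gamma>) 0"
    define k' where "k' = M2 \<gamma> \<delta> (\<alpha> - fls_const b0 * \<gamma>) (\<beta> - fls_const b0 * \<delta>)"
    have keq: "k = mmul (branch b0) k'" by (simp add: M2 k'_def branch_def algebra_simps)
    have t: "\<alpha> * inverse \<gamma> - fls_const b0 \<in> piOinf"
      using h(1) inverse_Ounits_Oinf[OF gu] by (intro Oinf_nth_0_imp_piOinf) (simp_all add: b0_def)
    have e: "\<alpha> - fls_const b0 * \<gamma> = \<gamma> * (\<alpha> * inverse \<gamma> - fls_const b0)"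
      using gnz by (simp add: algebra_simps)
    have p: "\<alpha> - fls_const b0 * \<gamma> \<in> piOinf" unfolding e using h(3) t by (rule piOinf_mult_left)
    have d: "\<gamma> * (\<beta> - fls_const b0 * \<delta>) - \<delta> * (\<alpha> - fls_const b0 * \<gamma>) =
        - (\<alpha>*\<delta> - \<beta>*\<gamma>)"
      by (simp add: algebra_simps)
    have "k' \<in> Iwahori" unfolding k'_def mem_Iwahori_iff d using h p Ounits_uminus[OF h(5)] by simp
    thus ?thesis using keq by blast
  qed
qed

lemma edges_from_vertexOf:
  assumes h: "mdet h \<noteq> 0"
  shows "{e \<in> Edges. origin e = vertexOf h} =
    insert (edgeOf h) (range (\<lambda>b. edgeOf (mmul h (branch b))))"
    (is "?E = insert (edgeOf h) ?B")
proof
  show "?E \<subseteq> insert (edgeOf h) ?B"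
  proof
    fix e assume "e \<in> ?E"
    then obtain g where g: "mdet g \<noteq> 0" "e = edgeOf g" "vertexOf g = vertexOf h"
      using EdgesE by (force simp: origin_edgeOf)
    obtain a k where ak: "a \<noteq> 0" "k \<in> GL2O" "g = mmul h (mmul (mat_scalar a) k)"
      using vertexOf_eqD[OF sym[OF g(3)]] by blast
    have "g = mmul (mmul h k) (mat_scalar a)"
      using ak(3) by (simp add: mat_scalar_commute mmul_assoc)
    hence e: "e = edgeOf (mmul h k)" using g(2) edgeOf_mmul_scalar[OF ak(1)] by simp
    from GL2O_cases[OF ak(2)] show "e \<in> insert (edgeOf h) ?B"
    proof
      assume "k \<in> Iwahori"
      thus ?thesis using e edgeOf_mmul_Iwahori[of k h] by simp
    next
      assume "\<exists>b k'. k' \<in> Iwahori \<and> k = mmul (branch b) k'"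
      then obtain b k' where "k' \<in> Iwahori" "k = mmul (branch b) k'" by blast
      hence "e = edgeOf (mmul h (branch b))"
        using e edgeOf_mmul_Iwahori by (simp add: mmul_assoc[symmetric])
      thus ?thesis by blast
    qed
  qed
next
  have "mdet (mmul h (branch b)) \<noteq> 0" for b using h by (simp add: mdet_mmul mdet_branch)
  thus "insert (edgeOf h) ?B \<subseteq> ?E"
    using h by (auto simp: edgeOf_Edges origin_edgeOf vertexOf_mmul_GL2O[OF branch_GL2O])
qed

lemma edgeOf_notin_branches:
  assumes h: "mdet h \<noteq> 0"
  shows "edgeOf h \<notin> range (\<lambda>b. edgeOf (mmul h (branch b)))"
proof
  assume "edgeOf h \<in> range (\<lambda>b. edgeOf (mmul h (branch b)))"
  then obtain b where "edgeOf h = edgeOf (mmul h (branch b))" by auto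
  then obtain a k where ak: "a \<noteq> 0" "k \<in> Iwahori" "mmul h (branch b) = mmul h (mmul (mat_scalar a) k)"
    using edgeOf_eqD by blast
  have e: "branch b = mmul (mat_scalar a) k" using mmul_cancel_left[OF h ak(3)] .
  obtain \<alpha> \<beta> \<gamma> \<delta> where k: "k = M2 \<alpha> \<beta> \<gamma> \<delta>" by (cases k)
  have "\<delta> = 0" using e ak(1) by (simp add: k branch_def mat_scalar_def)
  moreover have "\<beta> \<in> Oinf" "\<gamma> \<in> piOinf" "\<alpha>*\<delta> - \<beta>*\<gamma> \<in> Ounits"
    using ak(2) by (simp_all add: k mem_Iwahori_iff)
  ultimately have "- (\<beta>*\<gamma>) \<in> Ounits" "- (\<beta>*\<gamma>) \<in> piOinf" by (simp_all add: piOinf_mult_left)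
  thus False using piOinf_not_Ounits by blast
qed

lemma inj_branches:
  assumes h: "mdet h \<noteq> 0"
  shows "inj (\<lambda>b. edgeOf (mmul h (branch b)))"
proof (rule injI)
  fix b b' assume "edgeOf (mmul h (branch b)) = edgeOf (mmul h (branch b'))"
  then obtain a k where ak: "a \<noteq> 0" "k \<in> Iwahori"
    "mmul h (branch b') = mmul (mmul h (branch b)) (mmul (mat_scalar a) k)"
    using edgeOf_eqD by blast
  hence "mmul h (branch b') = mmul h (mmul (branch b) (mmul (mat_scalar a) k))"
    by (simp add: mmul_assoc)
  hence "branch b' = mmul (branch b) (mmul (mat_scalar a) k)"
    by (rule mmul_cancel_left[OF h])
  moreover obtain \<alpha> \<beta> \<gamma> \<delta> where k: "k = M2 \<alpha> \<beta> \<gamma> \<delta>" by (cases k)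
  ultimately have e: "a * \<alpha> = 1" "\<beta> = 0" "fls_const b + a * \<gamma> = fls_const b'"
    using ak(1) by (simp_all add: branch_def mat_scalar_def)
  have i: "\<alpha> \<in> Oinf" "\<delta> \<in> Oinf" "\<gamma> \<in> piOinf" "\<alpha>*\<delta> - \<beta>*\<gamma> \<in> Ounits"
    using ak(2) by (simp_all add: k mem_Iwahori_iff)
  hence "\<alpha> \<in> Ounits" using e(2) by (simp add: Ounits_mult_iff)
  moreover have "inverse \<alpha> = a" using e(1) by (simp add: inverse_unique mult.commute)
  ultimately have "a * \<gamma> \<in> piOinf" using i(3) by (metis inverse_Ounits_Oinf piOinf_mult_left)
  moreover have "a * \<gamma> = fls_const (b' - b)"
    using e(3) by (simp add: fls_minus_const[symmetric] eq_diff_eq add.commute)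
  ultimately have "fls_const (b' - b) \<in> piOinf" by simp
  hence "fls_nth (fls_const (b' - b)) 0 = 0" by (metis mem_piOinf_iff zero_less_one)
  thus "b = b'" by simp
qed

lemma harmonic_sum_at_vertexOf:
  fixes F :: "'k::{finite,field} fls mat2 set \<Rightarrow> complex"
  assumes "harmonic F" "mdet h \<noteq> 0"
  shows "F (edgeOf h) + (\<Sum>b\<in>UNIV. F (edgeOf (mmul h (branch b)))) = 0"
proof -
  have "vertexOf h \<in> Vertices" using assms(2) by (rule vertexOf_Vertices)
  hence "0 = (\<Sum>e\<in>{e \<in> Edges. origin e = vertexOf h}. F e)"
    using assms(1) by (simp add: harmonic_def)
  also have "\<dots> = F (edgeOf h) + (\<Sum>e\<in>range (\<lambda>b. edgeOf (mmul h (branch b))). F e)"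
    unfolding edges_from_vertexOf[OF assms(2)]
    using edgeOf_notin_branches[OF assms(2)] by (simp add: sum.insert)
  also have "\<dots> = F (edgeOf h) + (\<Sum>b\<in>UNIV. F (edgeOf (mmul h (branch b))))"
    using inj_branches[OF assms(2)] by (simp add: sum.reindex)
  finally show ?thesis ..
qed

definition std_edge :: "nat \<Rightarrow> 'k::field fls \<Rightarrow> 'k fls mat2 set" where
  "std_edge r u = edgeOf (M2 (fls_X ^ r) u 0 1)"

lemma std_edge_Edges: "std_edge r u \<in> Edges" by (simp add: std_edge_def edgeOf_Edges)

lemma opp_std_edge_Suc: "opp (std_edge (Suc r) u) = edgeOf (M2 u (fls_X ^ r) 1 0)"
proof -
  have "mmul (M2 (fls_X ^ Suc r) u 0 1) wmat = mmul (M2 u (fls_X ^ r) 1 0) (mat_scalar fls_X)"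
    by (simp add: wmat_def mat_scalar_def algebra_simps)
  thus ?thesis by (simp add: std_edge_def opp_edgeOf edgeOf_mmul_scalar)
qed

lemma harmonic_opp: "harmonic F \<Longrightarrow> e \<in> Edges \<Longrightarrow> F (opp e) = - F e"
  by (simp add: harmonic_def)

lemma harmonic_std_edge:
  fixes F :: "'k::{finite,field} fls mat2 set \<Rightarrow> complex"
  assumes "harmonic F"
  shows "F (std_edge r u) = (\<Sum>b\<in>UNIV. F (std_edge (Suc r) (u + fls_const b * fls_X ^ r)))"
proof -
  let ?h = "M2 (fls_X ^ r) u 0 (1::'k fls)" and ?v = "\<lambda>b. u + fls_const b * fls_X ^ r"
  have "edgeOf (mmul ?h (branch b)) = opp (std_edge (Suc r) (?v b))" for b
    by (simp add: opp_std_edge_Suc branch_def algebra_simps)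
  hence "F (std_edge r u) + (\<Sum>b\<in>UNIV. - F (std_edge (Suc r) (?v b))) = 0"
    using harmonic_sum_at_vertexOf[OF assms, of ?h]
    by (simp add: std_edge_def harmonic_opp[OF assms] std_edge_Edges[unfolded std_edge_def]
        del: power_Suc)
  thus ?thesis by (simp add: sum_negf eq_neg_iff_add_eq_0)
qed

lemma emb_nth: "fls_nth (emb a) j = (if j \<le> 0 then coeff a (nat (-j)) else 0)"
proof (cases "j \<le> 0")
  case True
  have "fls_nth (emb a) j = (\<Sum>i\<le>degree a. if i = nat (-j) then coeff a i else 0)"
    unfolding emb_def fls_nth_sum using True by (intro sum.cong) auto
  also have "\<dots> = coeff a (nat (-j))" by (simp add: coeff_eq_0)
  finally show ?thesis using True by simp
qed (simp add: emb_def fls_nth_sum)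

lemma emb_add: "emb (a + b) = emb a + emb b"
  by (rule fls_eqI) (simp add: emb_nth)
lemma emb_0 [simp]: "emb 0 = 0"
  by (rule fls_eqI) (simp add: emb_nth)
lemma emb_smult: "emb (smult c a) = fls_const c * emb a"
  by (rule fls_eqI) (simp add: emb_nth)
lemma emb_pCons0: "emb [:c:] = fls_const c"
  by (rule fls_eqI) (auto simp: emb_nth coeff_pCons split: nat.split)
lemma emb_1 [simp]: "emb 1 = 1"
  using emb_pCons0[of 1] by (simp add: one_pCons)
lemma emb_monom: "emb (monom c k) = fls_const c * fls_X_inv ^ k"
  by (rule fls_eqI) (auto simp: emb_nth coeff_monom)

lemma emb_monom_mult_nth_1: "fls_nth (emb (monom c k) * w) 1 = c * fls_nth w (1 + int k)"
proof -
  have "emb (monom c k) * w = fls_const c * (fls_X_inv ^ k * w)" by (simp only: emb_monom mult.assoc)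
  thus ?thesis by (simp add: fls_X_inv_power_times_conv_shift add.commute)
qed

section \<open>\<open>\<Gamma>\<^sub>0(n)\<close>-invariant cochains\<close>

lemma HH_harmonic: "F \<in> HH n \<Longrightarrow> harmonic F"
  by (simp add: HH_def)

lemma HH_invariant:
  assumes "F \<in> HH n" "\<gamma> \<in> Gamma0 n" "mdet g \<noteq> 0"
  shows "F (edgeOf (mmul (memb \<gamma>) g)) = F (edgeOf g)"
  using assms edgeOf_Edges by (auto simp: HH_def simp flip: act_edgeOf)

lemma Gamma0_translation: "M2 1 c 0 1 \<in> Gamma0 n"
  unfolding Gamma0_def by auto

lemma Gamma0_diagonal: "l \<noteq> 0 \<Longrightarrow> M2 [:l:] 0 0 1 \<in> Gamma0 n"
  unfolding Gamma0_def
  by (auto simp: is_unit_const_poly_iff intro: field_class.field_divide_inverse dvdI[of _ _ "inverse l"])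

lemma Gamma0_lower: "M2 1 0 n 1 \<in> Gamma0 n"
  unfolding Gamma0_def by auto

lemma HH_std_edge_add_emb:
  assumes "F \<in> HH n"
  shows "F (std_edge r (u + emb c)) = F (std_edge r u)"
proof -
  have "mmul (memb (M2 1 c 0 1)) (M2 (fls_X ^ r) u 0 1) = M2 (fls_X ^ r) (u + emb c) 0 1"
    by (simp add: algebra_simps)
  thus ?thesis
    using HH_invariant[OF assms Gamma0_translation, of "M2 (fls_X ^ r) u 0 1" c]
    by (simp add: std_edge_def)
qed

lemma HH_std_edge_scale:
  assumes "F \<in> HH n" "l \<noteq> 0"
  shows "F (std_edge r (fls_const l * u)) = F (std_edge r u)"
proof -
  let ?g = "M2 (fls_X ^ r) u 0 1"
  have eq: "mmul (memb (M2 [:l:] 0 0 1)) ?g =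
      mmul (M2 (fls_X ^ r) (fls_const l * u) 0 1) (M2 (fls_const l) 0 0 1)"
    by (simp add: emb_pCons0 algebra_simps)
  have "M2 (fls_const l) 0 0 1 \<in> Iwahori"
    using assms(2) by (simp add: mem_Iwahori_iff Ounits_const)
  hence "edgeOf (mmul (memb (M2 [:l:] 0 0 1)) ?g) = std_edge r (fls_const l * u)"
    unfolding eq std_edge_def by (rule edgeOf_mmul_Iwahori)
  thus ?thesis
    using HH_invariant[OF assms(1) Gamma0_diagonal[OF assms(2)], of ?g] by (simp add: std_edge_def)
qed

lemma std_edge_add_Oinf: "y \<in> Oinf \<Longrightarrow> std_edge r (u + fls_X ^ r * y) = std_edge r u"
proof -
  assume y: "y \<in> Oinf"
  have "M2 (fls_X ^ r) (u + fls_X ^ r * y) 0 1 = mmul (M2 (fls_X ^ r) u 0 1) (M2 1 y 0 1)"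
    by (simp add: algebra_simps)
  moreover have "M2 1 y 0 1 \<in> Iwahori" using y by (simp add: mem_Iwahori_iff mem_Ounits_iff)
  ultimately show ?thesis unfolding std_edge_def by (simp only: edgeOf_mmul_Iwahori)
qed

text \<open>The element \<open>[[1, 0], [n, 1]]\<close> of \<open>\<Gamma>\<^sub>0(n)\<close> carries \<open>std_edge (d + 1) (-\<pi>\<^sup>d)\<close>
  to the opposite of \<open>std_edge d 0\<close>, where \<open>d = deg n\<close>: the matrix \<open>k\<close> below lies in the
  Iwahori group because \<open>n \<pi>\<^sup>d \<equiv> 1 (mod \<pi>)\<close> for monic \<open>n\<close>.\<close>

lemma HH_std_edge_flip:
  fixes n :: "'k::{finite,field} poly"
  assumes "F \<in> HH n" "lead_coeff n = 1"
  shows "F (std_edge (Suc (degree n)) (- (fls_X ^ degree n))) = - F (std_edge (degree n) 0)"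
proof -
  let ?d = "degree n"
  let ?p = "emb n * fls_X ^ ?d" and ?g = "M2 (fls_X ^ Suc ?d) (- (fls_X ^ ?d)) 0 1"
  have p: "fls_nth ?p j = (if j \<le> int ?d then coeff n (nat (int ?d - j)) else 0)" for j
    by (simp add: fls_X_power_times_conv_shift emb_nth)
  hence pO: "?p \<in> Oinf" unfolding mem_Oinf_iff by (auto simp: coeff_eq_0)
  moreover have "fls_nth ?p 0 = 1" using p assms(2) by simp
  ultimately have "1 - ?p \<in> piOinf" by (intro Oinf_nth_0_imp_piOinf) simp_all
  define q where "q = fls_shift 1 (1 - ?p)"
  have qO: "q \<in> Oinf" unfolding q_def by (rule fls_shift_1_piOinf) fact
  have Xq: "fls_X * q = 1 - ?p" unfolding q_def by (rule fls_X_times_shift_1)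
  define k where "k = M2 ?p q fls_X (-1)"
  have "?p * (-1) - q * fls_X = -1" using Xq by (simp add: algebra_simps)
  hence k: "k \<in> Iwahori" unfolding k_def mem_Iwahori_iff using pO qO by (simp add: mem_Ounits_iff)
  have "mmul (memb (M2 1 0 n 1)) ?g = mmul (mmul (M2 (fls_X ^ ?d) 0 0 1) wmat) k"
    using Xq by (simp add: k_def wmat_def algebra_simps)
  hence "F (std_edge (Suc ?d) (- (fls_X ^ ?d))) = F (opp (std_edge ?d 0))"
    using HH_invariant[OF assms(1) Gamma0_lower, of ?g]
    by (simp add: std_edge_def opp_edgeOf edgeOf_mmul_Iwahori[OF k])
  also have "\<dots> = - F (std_edge ?d 0)" by (rule harmonic_opp[OF HH_harmonic[OF assms(1)] std_edge_Edges])
  finally show ?thesis .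
qed

section \<open>Riemann sums for the Haar integral\<close>

lemma trunc_set_0: "trunc_set 0 = {0}"
proof
  show "trunc_set 0 \<subseteq> {0}"
  proof
    fix u assume "u \<in> trunc_set 0"
    hence "u = 0" by (intro fls_eqI) (force simp: trunc_set_def)
    thus "u \<in> {0}" by simp
  qed
qed (simp add: trunc_set_def)

definition add_digit :: "nat \<Rightarrow> 'k::{finite,field} fls \<times> 'k \<Rightarrow> 'k fls" where
  "add_digit N = (\<lambda>(u, c). u + fls_const c * fls_X ^ Suc N)"

lemma bij_betw_add_digit: "bij_betw (add_digit N) (trunc_set N \<times> UNIV) (trunc_set (Suc N))"
proof (rule bij_betw_imageI)
  show "inj_on (add_digit N) (trunc_set N \<times> UNIV)"
  proof (rule inj_onI, clarify)
    fix u c u' c'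
    assume h: "u \<in> trunc_set N" "u' \<in> trunc_set N" "add_digit N (u, c) = add_digit N (u', c')"
    have "fls_nth u (Suc N) = 0" "fls_nth u' (Suc N) = 0"
      using h(1,2) by (force simp: trunc_set_def)+
    moreover have "fls_nth (add_digit N (u, c)) (Suc N) = fls_nth (add_digit N (u', c')) (Suc N)"
      using h(3) by simp
    ultimately have "c = c'" by (simp add: add_digit_def del: power_Suc)
    thus "u = u' \<and> c = c'" using h(3) by (simp add: add_digit_def)
  qed
  show "add_digit N ` (trunc_set N \<times> UNIV) = trunc_set (Suc N)"
  proof
    show "add_digit N ` (trunc_set N \<times> UNIV) \<subseteq> trunc_set (Suc N)"
      by (auto simp: add_digit_def trunc_set_def split: if_splits simp del: power_Suc)
  next
    show "trunc_set (Suc N) \<subseteq> add_digit N ` (trunc_set N \<times> UNIV)"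
    proof
      fix v assume v: "v \<in> trunc_set (Suc N)"
      define c where "c = fls_nth v (Suc N)"
      define u where "u = v - fls_const c * fls_X ^ Suc N"
      have "u \<in> trunc_set N"
        using v by (auto simp: trunc_set_def u_def c_def split: if_splits simp del: power_Suc)
      moreover have "v = add_digit N (u, c)" by (simp add: add_digit_def u_def)
      ultimately show "v \<in> add_digit N ` (trunc_set N \<times> UNIV)" by blast
    qed
  qed
qed

lemma finite_trunc_set: "finite (trunc_set N :: 'k::{finite,field} fls set)"
  by (induction N) (simp_all add: trunc_set_0 bij_betw_finite[OF bij_betw_add_digit, symmetric])

lemma sum_trunc_set_Suc:
  "(\<Sum>v\<in>trunc_set (Suc N). h v) = (\<Sum>u\<in>trunc_set N. \<Sum>c\<in>UNIV. h (u + fls_const c * fls_X ^ Suc N))"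
proof -
  have "(\<Sum>v\<in>trunc_set (Suc N). h v) = (\<Sum>x\<in>trunc_set N \<times> UNIV. h (add_digit N x))"
    by (rule sum.reindex_bij_betw[OF bij_betw_add_digit, symmetric])
  also have "\<dots> = (\<Sum>u\<in>trunc_set N. \<Sum>c\<in>UNIV. h (add_digit N (u, c)))"
    by (simp add: sum.cartesian_product case_prod_unfold)
  finally show ?thesis by (simp add: add_digit_def)
qed

lemma trunc_set_scale: "u \<in> trunc_set N \<Longrightarrow> fls_const l * u \<in> trunc_set N"
  by (auto simp: trunc_set_def)
lemma trunc_set_diff: "u \<in> trunc_set N \<Longrightarrow> v \<in> trunc_set N \<Longrightarrow> u - v \<in> trunc_set N"
  unfolding trunc_set_def by (auto) (metis diff_zero)+
lemma trunc_set_digit: "1 \<le> N \<Longrightarrow> fls_const c * fls_X ^ N \<in> trunc_set N"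
  by (auto simp: trunc_set_def split: if_splits)

lemma zero_in_trunc_set: "0 \<in> trunc_set N"
  by (simp add: trunc_set_def)

lemma trunc_set_scale_image:
  fixes l :: "'k::{finite,field}"
  shows "l \<noteq> 0 \<Longrightarrow> (\<lambda>u. fls_const l * u) ` trunc_set N = trunc_set N"
proof
  assume l: "l \<noteq> 0"
  show "trunc_set N \<subseteq> (\<lambda>u. fls_const l * u) ` trunc_set N"
  proof
    fix v :: "'k fls" assume v: "v \<in> trunc_set N"
    have "v = fls_const l * (fls_const (inverse l) * v)"
      using l by (simp add: mult.assoc[symmetric] fls_const_mult_const[symmetric])
    moreover have "fls_const (inverse l) * v \<in> trunc_set N" using v by (rule trunc_set_scale)
    ultimately show "v \<in> (\<lambda>u. fls_const l * u) ` trunc_set N" by blast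
  qed
qed (auto intro: trunc_set_scale)

lemma haar_eq_Riemann_sum:
  fixes h :: "'k::{finite,field} fls \<Rightarrow> complex"
  assumes inv: "\<And>N u c. N \<ge> N0 \<Longrightarrow> u \<in> trunc_set N \<Longrightarrow>
    h (u + fls_const c * fls_X ^ Suc N) = h u"
  shows "haar h = (\<Sum>u\<in>trunc_set N0. h u) / of_nat (CARD('k) ^ N0)"
proof -
  define s where "s N = (\<Sum>u\<in>trunc_set N. h u) / of_nat (CARD('k) ^ N)" for N
  have q0: "(of_nat CARD('k) :: complex) \<noteq> 0" by simp
  have s_Suc: "s (Suc N) = s N" if "N \<ge> N0" for N
  proof -
    have "(\<Sum>v\<in>trunc_set (Suc N). h v) = (\<Sum>u\<in>trunc_set N. \<Sum>c\<in>(UNIV::'k set). h u)"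
      unfolding sum_trunc_set_Suc using inv[OF that] by simp
    also have "\<dots> = of_nat CARD('k) * (\<Sum>u\<in>trunc_set N. h u)"
      by (simp add: sum_distrib_left)
    finally show ?thesis unfolding s_def using q0 by (simp add: field_simps power_Suc)
  qed
  have const: "s N = s N0" if "N \<ge> N0" for N
    using that
  proof (induction N rule: dec_induct)
    case (step N) thus ?case using s_Suc[of N] by simp
  qed simp
  have "s \<longlonglongrightarrow> s N0"
    by (rule tendsto_eventually) (auto simp: eventually_sequentially intro: exI[of _ N0] const)
  hence "lim s = s N0" by (rule limI)
  thus ?thesis unfolding haar_def s_def by simp
qed

lemma psi_add: "psi (x + y) = psi x * psi (y :: 'k::{finite,field} fls)"
  by (simp add: psi_eq_psi0 psi0_add)

lemma psi_0: "psi (0 :: 'k::{finite,field} fls) = 1"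
  by (simp add: psi_eq_psi0 psi0_0)

lemma psi_add_high_digit:
  fixes m :: "'k::{finite,field} poly"
  assumes "coeff m N = 0"
  shows "psi (- (emb m * (u + fls_const c * fls_X ^ Suc N))) = psi (- (emb m * u))"
proof -
  have "fls_nth (emb m * (fls_const c * fls_X ^ Suc N)) 1 = c * fls_nth (emb m * fls_X ^ Suc N) 1"
    by (simp add: mult.left_commute[of "emb m"] del: power_Suc)
  also have "\<dots> = 0"
    using assms by (simp add: fls_X_power_times_conv_shift emb_nth del: power_Suc)
  finally show ?thesis by (simp add: psi_eq_psi0 distrib_left del: power_Suc)
qed

lemma std_edge_add_high_digit:
  fixes c :: "'k::field"
  assumes "L \<le> N"
  shows "std_edge (Suc L) (u + fls_const c * fls_X ^ Suc N) = std_edge (Suc L) u"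
proof -
  have "(fls_X :: 'k fls) ^ Suc N = fls_X ^ Suc L * fls_X ^ (N - L)"
    using assms by (simp add: power_add[symmetric] del: power_Suc)
  hence "u + fls_const c * fls_X ^ Suc N = u + fls_X ^ Suc L * (fls_const c * fls_X ^ (N - L))"
    by (simp add: algebra_simps del: power_Suc)
  thus ?thesis by (simp only: std_edge_add_Oinf Oinf_mult Oinf_const Oinf_X_power)
qed

section \<open>Finite Fourier analysis\<close>

definition fourier_sum ::
  "('k::{finite,field} fls mat2 set \<Rightarrow> complex) \<Rightarrow> nat \<Rightarrow> 'k poly \<Rightarrow> complex" where
  "fourier_sum F L m = (\<Sum>u\<in>trunc_set L. F (std_edge (Suc L) u) * psi (- (emb m * u)))"

lemma fstar_eq_fourier_sum:
  fixes F :: "'k::{finite,field} fls mat2 set \<Rightarrow> complex"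
  assumes "\<And>N. N \<ge> L \<Longrightarrow> coeff m N = 0"
  shows "fstar F (Suc L) m = fourier_sum F L m / of_nat (CARD('k) ^ L)"
proof -
  have "fstar F (Suc L) m = haar (\<lambda>u. F (std_edge (Suc L) u) * psi (- (emb m * u)))"
    by (simp add: fstar_def fval_def std_edge_def)
  also have "\<dots> = fourier_sum F L m / of_nat (CARD('k) ^ L)"
    unfolding fourier_sum_def
    by (rule haar_eq_Riemann_sum)
      (simp add: std_edge_add_high_digit psi_add_high_digit assms del: power_Suc)
  finally show ?thesis .
qed

lemma cm_eq_fourier_sum:
  fixes F :: "'k::{finite,field} fls mat2 set \<Rightarrow> complex"
  shows "cm F m = fourier_sum F (Suc (degree m)) m / of_nat CARD('k)"
proof -
  have "fstar F (Suc (Suc (degree m))) m =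
      fourier_sum F (Suc (degree m)) m / of_nat (CARD('k) ^ Suc (degree m))"
    by (rule fstar_eq_fourier_sum) (simp add: coeff_eq_0)
  thus ?thesis unfolding cm_def by (simp add: field_simps)
qed

text \<open>Harmonicity at the origin of \<open>std_edge (Suc L) u\<close> refines the level of the sum.\<close>

lemma fourier_sum_Suc:
  fixes F :: "'k::{finite,field} fls mat2 set \<Rightarrow> complex"
  assumes "harmonic F" "coeff m L = 0"
  shows "fourier_sum F (Suc L) m = fourier_sum F L m"
proof -
  let ?v = "\<lambda>u b. u + fls_const b * fls_X ^ Suc L"
  have "fourier_sum F L m =
      (\<Sum>u\<in>trunc_set L. (\<Sum>b\<in>UNIV. F (std_edge (Suc (Suc L)) (?v u b))) * psi (- (emb m * u)))"
    unfolding fourier_sum_def by (simp only: harmonic_std_edge[OF assms(1), of "Suc L"])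
  also have "\<dots> = (\<Sum>u\<in>trunc_set L. \<Sum>b\<in>UNIV.
      F (std_edge (Suc (Suc L)) (?v u b)) * psi (- (emb m * ?v u b)))"
    by (simp add: sum_distrib_right psi_add_high_digit[OF assms(2)] del: power_Suc)
  also have "\<dots> = fourier_sum F (Suc L) m"
    unfolding fourier_sum_def sum_trunc_set_Suc ..
  finally show ?thesis by simp
qed

lemma fourier_sum_level:
  fixes F :: "'k::{finite,field} fls mat2 set \<Rightarrow> complex"
  assumes "harmonic F" "\<And>N. N \<ge> L0 \<Longrightarrow> coeff m N = 0" "L0 \<le> L"
  shows "fourier_sum F L m = fourier_sum F L0 m"
  using assms(3)
proof (induction L rule: dec_induct)
  case (step L)
  thus ?case using fourier_sum_Suc[OF assms(1) assms(2)[of L]] by simp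
qed simp

lemma c0_eq_fourier_sum:
  fixes F :: "'k::{finite,field} fls mat2 set \<Rightarrow> complex"
  assumes "harmonic F"
  shows "c0 F = fourier_sum F L 0 / of_nat CARD('k)"
proof -
  have "fourier_sum F L' 0 = fourier_sum F 0 0" for L'
    using fourier_sum_level[OF assms, of 0 0 L'] by simp
  from this[of 1] this[of L] show ?thesis
    using fstar_eq_fourier_sum[of 1 0 F] by (simp add: c0_def numeral_2_eq_2)
qed

lemma fourier_sum_smult:
  fixes F :: "'k::{finite,field} fls mat2 set \<Rightarrow> complex"
  assumes "F \<in> HH n" "l \<noteq> 0"
  shows "fourier_sum F L (smult l m) = fourier_sum F L m"
proof -
  have "fourier_sum F L (smult l m) = (\<Sum>u\<in>trunc_set L.
      F (std_edge (Suc L) (fls_const l * u)) * psi (- (emb m * (fls_const l * u))))"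
    unfolding fourier_sum_def by (simp only: emb_smult HH_std_edge_scale[OF assms]) (simp add: mult_ac)
  also have "\<dots> = (\<Sum>u\<in>(\<lambda>u. fls_const l * u) ` trunc_set L.
      F (std_edge (Suc L) u) * psi (- (emb m * u)))"
    by (rule sum.reindex[symmetric, unfolded comp_def]) (use assms(2) in \<open>auto intro: inj_onI\<close>)
  also have "\<dots> = fourier_sum F L m"
    unfolding fourier_sum_def trunc_set_scale_image[OF assms(2)] ..
  finally show ?thesis .
qed

definition low_polys :: "nat \<Rightarrow> 'k::{finite,field} poly set" where
  "low_polys D = {m. \<forall>k\<ge>D. coeff m k = 0}"

lemma finite_low_polys: "finite (low_polys D :: 'k::{finite,field} poly set)"
proof -
  have "low_polys D \<subseteq> Poly ` {xs. set xs \<subseteq> (UNIV :: 'k set) \<and> length xs = D}"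
  proof
    fix m :: "'k poly" assume "m \<in> low_polys D"
    hence "m = Poly (map (coeff m) [0..<D])"
      by (intro poly_eqI) (auto simp: low_polys_def coeff_Poly_eq nth_default_def not_less)
    thus "m \<in> Poly ` {xs. set xs \<subseteq> UNIV \<and> length xs = D}" by (rule image_eqI) simp
  qed
  moreover have "finite {xs. set xs \<subseteq> (UNIV :: 'k set) \<and> length xs = D}"
    by (rule finite_lists_length_eq) simp
  ultimately show ?thesis by (rule finite_subset[OF _ finite_imageI])
qed

lemma zero_in_low_polys: "0 \<in> low_polys D"
  by (simp add: low_polys_def)

lemma card_low_polys_nonzero: "card (low_polys D :: 'k::{finite,field} poly set) \<noteq> 0"
  using finite_low_polys[where 'k='k] zero_in_low_polys by (auto simp: card_eq_0_iff)

lemma degree_low_polys: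
  assumes "m \<in> low_polys D" "m \<noteq> 0"
  shows "degree m < D"
proof (rule ccontr)
  assume "\<not> degree m < D"
  hence "lead_coeff m = 0" using assms(1) by (simp add: low_polys_def)
  thus False using assms(2) by simp
qed

text \<open>Orthogonality of the characters \<open>u \<mapsto> psi (m u)\<close>: a nonzero \<open>w\<close> has a nonzero
  digit at some position \<open>k + 1 \<le> D\<close>, and translating by a suitable monomial \<open>c \<theta>^k\<close>
  multiplies the sum by a nontrivial value of \<open>psi0\<close>.\<close>

lemma sum_psi_low_polys:
  fixes w :: "'k::{finite,field} fls"
  assumes w: "w \<in> trunc_set D"
  shows "(\<Sum>m\<in>low_polys D. psi (emb m * w)) =
    (if w = 0 then of_nat (card (low_polys D :: 'k poly set)) else 0)"
proof (cases "w = 0")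
  case False
  then obtain j where j: "fls_nth w j \<noteq> 0" using fls_eqI[of w 0] by auto
  hence "1 \<le> j" "j \<le> int D" using w by (auto simp: trunc_set_def)
  define k where "k = nat (j - 1)"
  have k: "k < D" "1 + int k = j" using \<open>1 \<le> j\<close> \<open>j \<le> int D\<close> by (auto simp: k_def)
  obtain a :: 'k where a: "psi0 a \<noteq> 1" using ex_psi0_ne_1 by blast
  define m0 where "m0 = monom (a / fls_nth w j) k"
  have m0: "m0 \<in> low_polys D" using k(1) by (simp add: m0_def low_polys_def coeff_monom)
  have psi_m0: "psi (emb m0 * w) = psi0 a"
    using j by (simp add: m0_def psi_eq_psi0 emb_monom_mult_nth_1 k(2))
  let ?s = "\<Sum>m\<in>low_polys D. psi (emb m * w)"
  have "(\<Sum>m\<in>low_polys D. psi (emb (m + m0) * w)) = ?s"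
    by (rule sum.reindex_bij_witness[of _ "\<lambda>m. m - m0" "\<lambda>m. m + m0"])
       (use m0 in \<open>auto simp: low_polys_def\<close>)
  moreover have "(\<Sum>m\<in>low_polys D. psi (emb (m + m0) * w)) = ?s * psi0 a"
    by (simp add: emb_add distrib_right psi_add psi_m0 sum_distrib_right)
  ultimately have "(1 - psi0 a) * ?s = 0" by (simp add: algebra_simps)
  thus ?thesis using a False by simp
qed (simp add: psi_0)

lemma fourier_inversion:
  fixes F :: "'k::{finite,field} fls mat2 set \<Rightarrow> complex"
  assumes u0: "u0 \<in> trunc_set D"
  shows "(\<Sum>m\<in>low_polys D. psi (emb m * u0) * fourier_sum F D m) =
    of_nat (card (low_polys D :: 'k poly set)) * F (std_edge (Suc D) u0)"
proof -
  let ?P = "low_polys D :: 'k poly set" and ?f = "\<lambda>u. F (std_edge (Suc D) u)"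
  have "psi (emb m * u0) * fourier_sum F D m =
      (\<Sum>u\<in>trunc_set D. ?f u * psi (emb m * (u0 - u)))" for m
  proof -
    have "psi (emb m * u0) * fourier_sum F D m =
        (\<Sum>u\<in>trunc_set D. ?f u * (psi (emb m * u0) * psi (- (emb m * u))))"
      unfolding fourier_sum_def by (simp add: sum_distrib_left mult_ac)
    thus ?thesis by (simp add: psi_add[symmetric] right_diff_distrib)
  qed
  hence "(\<Sum>m\<in>?P. psi (emb m * u0) * fourier_sum F D m) =
      (\<Sum>u\<in>trunc_set D. ?f u * (\<Sum>m\<in>?P. psi (emb m * (u0 - u))))"
    by (simp add: sum.swap[of _ ?P] sum_distrib_left)
  also have "\<dots> = (\<Sum>u\<in>trunc_set D. if u = u0 then ?f u * of_nat (card ?P) else 0)"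
    by (intro sum.cong refl) (simp add: sum_psi_low_polys trunc_set_diff u0)
  also have "\<dots> = of_nat (card ?P) * ?f u0"
    using u0 by (simp add: finite_trunc_set)
  finally show ?thesis .
qed

context
  fixes n :: "'k::{finite,field} poly" and F :: "'k fls mat2 set \<Rightarrow> complex"
  assumes F: "F \<in> HH n"
    and cm: "\<forall>m. lead_coeff m = 1 \<and> degree m < degree n \<longrightarrow> cm F m = 0"
begin

text \<open>Normalising \<open>m\<close> to be monic, the hypothesis on the \<open>c\<^sub>m\<close> kills all Fourier
  coefficients of \<open>F\<close> at level \<open>deg n\<close> except the constant one.\<close>

lemma fourier_sum_vanishes:
  assumes m: "m \<in> low_polys (degree n)" "m \<noteq> 0"
  shows "fourier_sum F (degree n) m = 0"
proof -
  define l where "l = lead_coeff m"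
  have l: "l \<noteq> 0" using m(2) by (simp add: l_def)
  define m1 where "m1 = smult (inverse l) m"
  have m1: "lead_coeff m1 = 1" "degree m1 < degree n"
    using l degree_low_polys[OF m] by (simp_all add: m1_def l_def)
  have "fourier_sum F (degree n) m = fourier_sum F (degree n) m1"
    using fourier_sum_smult[OF F l, of "degree n" m1] l by (simp add: m1_def)
  also have "\<dots> = fourier_sum F (Suc (degree m1)) m1"
    by (rule fourier_sum_level[OF HH_harmonic[OF F]]) (use m1 in \<open>auto simp: coeff_eq_0\<close>)
  also have "\<dots> = 0"
    using cm m1 by (simp add: cm_eq_fourier_sum)
  finally show ?thesis .
qed

lemma HH_std_edge_const:
  assumes u: "u \<in> trunc_set (degree n)"
  shows "F (std_edge (Suc (degree n)) u) =
    fourier_sum F (degree n) 0 / of_nat (card (low_polys (degree n) :: 'k poly set))"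
proof -
  have "(\<Sum>m\<in>low_polys (degree n). psi (emb m * u) * fourier_sum F (degree n) m) =
      fourier_sum F (degree n) 0"
    using fourier_sum_vanishes
    by (simp add: sum.remove[OF finite_low_polys zero_in_low_polys] psi_0)
  thus ?thesis
    using fourier_inversion[OF u, of F] card_low_polys_nonzero[where 'k='k]
    by (simp add: field_simps)
qed

lemma HH_std_edge_digit:
  "F (std_edge (Suc (degree n)) (fls_const b * fls_X ^ degree n)) =
    F (std_edge (Suc (degree n)) 0)"
proof (cases "degree n = 0")
  case True
  thus ?thesis using HH_std_edge_add_emb[OF F, of 1 0 "[:b:]"] by (simp add: emb_pCons0)
next
  case False
  hence "fls_const b * fls_X ^ degree n \<in> trunc_set (degree n)"
    by (intro trunc_set_digit) simp
  thus ?thesis using HH_std_edge_const HH_std_edge_const[OF zero_in_trunc_set] by simp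
qed

end

theorem lemma4p8:
  fixes n :: "'k::{finite,field} poly"
    and F :: "'k fls mat2 set \<Rightarrow> complex"
  assumes "lead_coeff n = 1"
    and "F \<in> HH n"
    and "\<forall>m. lead_coeff m = 1 \<and> degree m < degree n \<longrightarrow> cm F m = 0"
  shows "c0 F = 0"
proof -
  let ?d = "degree n"
  let ?G = "F (std_edge (Suc ?d) 0)"
  have "F (std_edge ?d 0) = of_nat CARD('k) * ?G"
    using harmonic_std_edge[OF HH_harmonic[OF assms(2)], of ?d 0] HH_std_edge_digit[OF assms(2,3)]
    by simp
  moreover have "?G = - F (std_edge ?d 0)"
    using HH_std_edge_flip[OF assms(2,1)] HH_std_edge_digit[OF assms(2,3), of "-1"] by simp
  ultimately have "of_nat (Suc CARD('k)) * ?G = 0" by (simp add: algebra_simps)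
  hence "?G = 0" by (simp del: of_nat_Suc)
  hence "fourier_sum F ?d 0 = 0"
    using HH_std_edge_const[OF assms(2,3) zero_in_trunc_set] card_low_polys_nonzero[where 'k='k]
    by simp
  thus ?thesis using c0_eq_fourier_sum[OF HH_harmonic[OF assms(2)], of ?d] by simp
qed

end
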